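(* Assume the Framework and the Purification Postulate. Let $\Psi\in\mathfrak S_1(\mathrm A\tilde{\mathrm A})$ be a pure state that is dynamically faithful for $\mathrm A$, let $\tilde\omega:=(e_{\mathrm A}\otimes\mathcal I_{\tilde{\mathrm A}})\Psi$, and for $\mathcal C\in\mathfrak T(\mathrm A,\mathrm B)$ set $R_{\mathcal C}:=(\mathcal C\otimes\mathcal I_{\tilde{\mathrm A}})\Psi\in\mathfrak S(\mathrm B\tilde{\mathrm A})$. Then: (1) $\{\mathcal C_i\}_{i\in X}\mapsto\{R_{\mathcal C_i}\}_{i\in X}$ is a bijection between tests from $\mathrm A$ to $\mathrm B$ and preparation-tests $\{R_i\}_{i\in X}$ of $\mathrm B\tilde{\mathrm A}$ satisfying $\sum_{i\in X}(e_{\mathrm B}\otimes\mathcal I_{\tilde{\mathrm A}})R_i=\tilde\omega$; (2) $\mathcal C$ is atomic if and only if $R_{\mathcal C}$ is pure; (3) $\mathcal C\mapsto R_{\mathcal C}$ is a bijection between $\mathfrak T(\mathrm A,\mathrm B)$ and the set of states $R\in\mathfrak S(\mathrm B\tilde{\mathrm A})$ with $(e_{\mathrm B}\otimes\mathcal I_{\tilde{\mathrm A}})R\in D_{\tilde\omega}$.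
   Context: Framework. We work in an operational-probabilistic theory: there is a collection of systems $\mathrm A,\mathrm B,\dots$, closed under a composition $\mathrm A\mathrm B$ (associative, symmetric up to a reversible swap, with a trivial system $\mathrm I$ satisfying $\mathrm A\mathrm I=\mathrm A$); for each pair of systems a set $\mathfrak T(\mathrm A,\mathrm B)$ of transformations; a test from $\mathrm A$ to $\mathrm B$ is a finite collection $\{\mathcal C_i\}_{i\in X}\subseteq\mathfrak T(\mathrm A,\mathrm B)$, and every transformation belongs to some test. Tests are closed under sequential composition, parallel composition ($\otimes$), coarse-graining (summing outcomes over the blocks of a partition of $X$) and conditioning (choosing the next test depending on the outcome of the previous one). States of $\mathrm A$ are the elements of $\mathfrak S(\mathrm A):=\mathfrak T(\mathrm I,\mathrm A)$, effects are the elements of $\mathfrak T(\mathrm A,\mathrm I)$, and transformations $\mathrm I\to\mathrm I$ are probabilities in $[0,1]$ (those of a test sum to $1$; composition is multiplication). An effect $a$ and a state $\rho$ give the probability $(a|\rho)$. States (effects) are identified when they give equal probabilities on all effects (states); transformations $\mathcal C,\mathcal C'$ are identified when $\mathcal C\otimes\mathcal I_{\mathrm S}$ and $\mathcal C'\otimes\mathcal I_{\mathrm S}$ act identically on all states of $\mathrm A\mathrm S$ for every system $\mathrm S$. States span a finite-dimensional real vector space $\mathfrak S_{\mathbb R}(\mathrm A)$, transformations act linearly, and $\mathfrak T_{\mathbb R}(\mathrm A,\mathrm B)$ is the real span of $\mathfrak T(\mathrm A,\mathrm B)$. Standing assumptions: (i) causality: each system $\mathrm A$ has a unique deterministic effect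 $e_{\mathrm A}$ (the effect forming a one-outcome observation test), and $e_{\mathrm A\mathrm B}=e_{\mathrm A}\otimes e_{\mathrm B}$; (ii) local discriminability: if two states of $\mathrm A\mathrm B$ differ, some product effect $a\otimes b$ gives them different probabilities; (iii) all sets of states are closed, the theory is not deterministic (hence all sets of states, effects and transformations are convex), and perfectly distinguishable states exist. A state $\rho$ is normalized if $(e|\rho)=1$; $\mathfrak S_1(\mathrm A)$ is the set of normalized states. A channel is a $\mathcal C\in\mathfrak T(\mathrm A,\mathrm B)$ with $e_{\mathrm B}\circ\mathcal C=e_{\mathrm A}$. A channel $\mathcal U\in\mathfrak T(\mathrm A,\mathrm B)$ is reversible if some channel $\mathcal W\in\mathfrak T(\mathrm B,\mathrm A)$ satisfies $\mathcal W\mathcal U=\mathcal I_{\mathrm A}$, $\mathcal U\mathcal W=\mathcal I_{\mathrm B}$; $\mathbf G_{\mathrm A}$ is the group of reversible channels on $\mathrm A$. The marginal of a state $\sigma$ of $\mathrm A\mathrm B$ on $\mathrm A$ is $(\mathcal I_{\mathrm A}\otimes e_{\mathrm B})\sigma$. Refinement. For $\mathcal C\in\mathfrak T(\mathrm A,\mathrm B)$, write $\mathcal D\prec\mathcal C$ if there are a test $\{\mathcal D_j\}_{j\in Y}$ and $Y_0\subseteq Y$ with $\mathcal C=\sum_{j\in Y_0}\mathcal D_j$ and $\mathcal D\in\{\mathcal D_j\}_{j\in Y_0}$; the refinement set is $D_{\mathcal C}=\{\mathcal D:\mathcal D\prec\mathcal C\}$. $\mathcal C$ is atomic if $\mathcal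 D\prec\mathcal C$ implies $\mathcal D=\lambda\mathcal C$ for some $\lambda\in[0,1]$. A pure state is an atomic state; a state is mixed otherwise. A state $\omega$ of $\mathrm A$ is internal if $\mathrm{Span}(D_\omega)=\mathfrak S_{\mathbb R}(\mathrm A)$. Purification Postulate. For every $\rho\in\mathfrak S_1(\mathrm A)$ there are a system $\mathrm B$ and a pure $\Psi\in\mathfrak S_1(\mathrm A\mathrm B)$ with $(\mathcal I_{\mathrm A}\otimes e_{\mathrm B})\Psi=\rho$ (a purification of $\rho$, with purifying system $\mathrm B$); and if $\Psi,\Psi'\in\mathfrak S_1(\mathrm A\mathrm B)$ are purifications of the same state, then $\Psi'=(\mathcal I_{\mathrm A}\otimes\mathcal U)\Psi$ for some $\mathcal U\in\mathbf G_{\mathrm B}$. A state $\sigma\in\mathfrak S(\mathrm A\mathrm C)$ is dynamically faithful for system $\mathrm A$ if for every system $\mathrm B$ and every $\mathcal A,\mathcal A'\in\mathfrak T(\mathrm A,\mathrm B)$, $(\mathcal A\otimes\mathcal I_{\mathrm C})\sigma=(\mathcal A'\otimes\mathcal I_{\mathrm C})\sigma$ implies $\mathcal A=\mathcal A'$. A preparation-test of a system is a test from $\mathrm I$ to it. *)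

theory Defs
  imports "HOL-Analysis.Analysis"
begin

text \<open>
Systems have type 's, transformations have type 't (a real normed vector
space, so that coarse-grainings = sums, real spans and closedness make sense).
\<^item> cmp A B    : composite system AB;  unitS : the trivial system I
\<^item> Trans A B  : the set T(A,B) of transformations from A to B
\<^item> Tests A B  : the set of tests from A to B; a test with outcome set X is
               represented as a finite nonempty list (outcome i = i-th entry)
\<^item> sq g f     : sequential composition g after f
\<^item> pr f g     : parallel composition f (x) g
\<^item> idt A      : identity transformation of A
\<^item> eff A      : the deterministic effect e_A
\<^item> swp A B    : the swap AB -> BA
Probabilities (transformations I -> I) are the elements p *R idt I, 0 <= p <= 1;
thus the probability (a|rho) is represented by sq a rho.
\<close>

record ('s, 't) opt =
  cmp :: "'s \<Rightarrow> 's \<Rightarrow> 's"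
  unitS :: 's
  Trans :: "'s \<Rightarrow> 's \<Rightarrow> 't set"
  Tests :: "'s \<Rightarrow> 's \<Rightarrow> 't list set"
  sq :: "'t \<Rightarrow> 't \<Rightarrow> 't"
  pr :: "'t \<Rightarrow> 't \<Rightarrow> 't"
  idt :: "'s \<Rightarrow> 't"
  eff :: "'s \<Rightarrow> 't"
  swp :: "'s \<Rightarrow> 's \<Rightarrow> 't"

definition States :: "('s, 't::real_vector) opt \<Rightarrow> 's \<Rightarrow> 't set" where
  "States Th A = Trans Th (unitS Th) A"

definition Effects :: "('s, 't::real_vector) opt \<Rightarrow> 's \<Rightarrow> 't set" where
  "Effects Th A = Trans Th A (unitS Th)"

definition States1 :: "('s, 't::real_vector) opt \<Rightarrow> 's \<Rightarrow> 't set" where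
  "States1 Th A = {\<rho> \<in> States Th A. sq Th (eff Th A) \<rho> = idt Th (unitS Th)}"

definition channel :: "('s, 't::real_vector) opt \<Rightarrow> 's \<Rightarrow> 's \<Rightarrow> 't \<Rightarrow> bool" where
  "channel Th A B C \<longleftrightarrow> C \<in> Trans Th A B \<and> sq Th (eff Th B) C = eff Th A"

definition reversible :: "('s, 't::real_vector) opt \<Rightarrow> 's \<Rightarrow> 's \<Rightarrow> 't \<Rightarrow> bool" where
  "reversible Th A B U \<longleftrightarrow> channel Th A B U \<and>
     (\<exists>W. channel Th B A W \<and> sq Th W U = idt Th A \<and> sq Th U W = idt Th B)"

definition RevGroup :: "('s, 't::real_vector) opt \<Rightarrow> 's \<Rightarrow> 't set" where
  "RevGroup Th A = {U. reversible Th A A U}"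

definition marginal :: "('s, 't::real_vector) opt \<Rightarrow> 's \<Rightarrow> 's \<Rightarrow> 't \<Rightarrow> 't" where
  "marginal Th A B \<sigma> = sq Th (pr Th (idt Th A) (eff Th B)) \<sigma>"

definition refines :: "('s, 't::real_vector) opt \<Rightarrow> 's \<Rightarrow> 's \<Rightarrow> 't \<Rightarrow> 't \<Rightarrow> bool" where
  "refines Th A B D C \<longleftrightarrow>
     (\<exists>t \<in> Tests Th A B. \<exists>Y0 \<subseteq> {..<length t}.
        C = (\<Sum>j\<in>Y0. t ! j) \<and> D \<in> (\<lambda>j. t ! j) ` Y0)"

definition refset :: "('s, 't::real_vector) opt \<Rightarrow> 's \<Rightarrow> 's \<Rightarrow> 't \<Rightarrow> 't set" where
  "refset Th A B C = {D. refines Th A B D C}"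

definition atomic :: "('s, 't::real_vector) opt \<Rightarrow> 's \<Rightarrow> 's \<Rightarrow> 't \<Rightarrow> bool" where
  "atomic Th A B C \<longleftrightarrow> (\<forall>D. refines Th A B D C \<longrightarrow> (\<exists>lam. 0 \<le> lam \<and> lam \<le> 1 \<and> D = lam *\<^sub>R C))"

definition pure :: "('s, 't::real_vector) opt \<Rightarrow> 's \<Rightarrow> 't \<Rightarrow> bool" where
  "pure Th A \<rho> \<longleftrightarrow> \<rho> \<in> States Th A \<and> atomic Th (unitS Th) A \<rho>"

definition internal :: "('s, 't::real_vector) opt \<Rightarrow> 's \<Rightarrow> 't \<Rightarrow> bool" where
  "internal Th A \<omega> \<longleftrightarrow> span (refset Th (unitS Th) A \<omega>) = span (States Th A)"

definition dyn_faithful :: "('s, 't::real_vector) opt \<Rightarrow> 's \<Rightarrow> 's \<Rightarrow> 't \<Rightarrow> bool" where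
  "dyn_faithful Th A C \<sigma> \<longleftrightarrow>
     (\<forall>B \<A> \<A>'. \<A> \<in> Trans Th A B \<longrightarrow> \<A>' \<in> Trans Th A B \<longrightarrow>
        sq Th (pr Th \<A> (idt Th C)) \<sigma> = sq Th (pr Th \<A>' (idt Th C)) \<sigma> \<longrightarrow> \<A> = \<A>')"

definition opt_framework :: "('s, 't::real_normed_vector) opt \<Rightarrow> bool" where
  "opt_framework Th \<longleftrightarrow>
   \<comment> \<open>systems: associative composition with trivial system\<close>
   (\<forall>A B C. cmp Th (cmp Th A B) C = cmp Th A (cmp Th B C)) \<and>
   (\<forall>A. cmp Th A (unitS Th) = A) \<and> (\<forall>A. cmp Th (unitS Th) A = A) \<and>
   \<comment> \<open>tests are finite nonempty collections of transformations; every transformation is in a test\<close>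
   (\<forall>A B t. t \<in> Tests Th A B \<longrightarrow> t \<noteq> [] \<and> set t \<subseteq> Trans Th A B) \<and>
   (\<forall>A B. Trans Th A B = (\<Union>t\<in>Tests Th A B. set t)) \<and>
   (\<forall>A. [idt Th A] \<in> Tests Th A A) \<and>
   \<comment> \<open>sequential composition\<close>
   (\<forall>A B C f g. f \<in> Trans Th A B \<longrightarrow> g \<in> Trans Th B C \<longrightarrow> sq Th g f \<in> Trans Th A C) \<and>
   (\<forall>A B f. f \<in> Trans Th A B \<longrightarrow> sq Th (idt Th B) f = f \<and> sq Th f (idt Th A) = f) \<and>
   (\<forall>A B C D f g h. f \<in> Trans Th A B \<longrightarrow> g \<in> Trans Th B C \<longrightarrow> h \<in> Trans Th C D \<longrightarrow>
      sq Th h (sq Th g f) = sq Th (sq Th h g) f) \<and>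
   \<comment> \<open>parallel composition\<close>
   (\<forall>A B A' B' f g. f \<in> Trans Th A B \<longrightarrow> g \<in> Trans Th A' B' \<longrightarrow>
      pr Th f g \<in> Trans Th (cmp Th A A') (cmp Th B B')) \<and>
   (\<forall>A B. idt Th (cmp Th A B) = pr Th (idt Th A) (idt Th B)) \<and>
   (\<forall>A B C A' B' C' f g f' g'. f \<in> Trans Th A B \<longrightarrow> g \<in> Trans Th B C \<longrightarrow>
      f' \<in> Trans Th A' B' \<longrightarrow> g' \<in> Trans Th B' C' \<longrightarrow>
      sq Th (pr Th g g') (pr Th f f') = pr Th (sq Th g f) (sq Th g' f')) \<and>
   (\<forall>A B A' B' A'' B'' f g h. f \<in> Trans Th A B \<longrightarrow> g \<in> Trans Th A' B' \<longrightarrow> h \<in> Trans Th A'' B'' \<longrightarrow>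
      pr Th (pr Th f g) h = pr Th f (pr Th g h)) \<and>
   (\<forall>A B f. f \<in> Trans Th A B \<longrightarrow> pr Th f (idt Th (unitS Th)) = f \<and> pr Th (idt Th (unitS Th)) f = f) \<and>
   \<comment> \<open>symmetry up to a reversible swap (natural)\<close>
   (\<forall>A B. channel Th (cmp Th A B) (cmp Th B A) (swp Th A B) \<and>
      sq Th (swp Th B A) (swp Th A B) = idt Th (cmp Th A B)) \<and>
   (\<forall>A B A' B' f g. f \<in> Trans Th A B \<longrightarrow> g \<in> Trans Th A' B' \<longrightarrow>
      sq Th (swp Th B B') (pr Th f g) = sq Th (pr Th g f) (swp Th A A')) \<and>
   \<comment> \<open>linearity: composition is bilinear\<close>
   bilinear (sq Th) \<and> bilinear (pr Th) \<and>
   \<comment> \<open>closure of tests: parallel composition, conditioning (includes sequential composition), coarse-graining (includes relabelling)\<close>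
   (\<forall>A B A' B' t u. t \<in> Tests Th A B \<longrightarrow> u \<in> Tests Th A' B' \<longrightarrow>
      concat (map (\<lambda>f. map (\<lambda>g. pr Th f g) u) t) \<in> Tests Th (cmp Th A A') (cmp Th B B')) \<and>
   (\<forall>A B C t u. t \<in> Tests Th A B \<longrightarrow> (\<forall>i<length t. u i \<in> Tests Th B C) \<longrightarrow>
      concat (map (\<lambda>i. map (\<lambda>g. sq Th g (t ! i)) (u i)) [0..<length t]) \<in> Tests Th A C) \<and>
   (\<forall>A B t (f::nat \<Rightarrow> nat) m. t \<in> Tests Th A B \<longrightarrow> (\<forall>i<length t. f i < m) \<longrightarrow>
      (\<forall>j<m. \<exists>i<length t. f i = j) \<longrightarrow>
      map (\<lambda>j. \<Sum>i\<in>{i. i < length t \<and> f i = j}. t ! i) [0..<m] \<in> Tests Th A B) \<and>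
   \<comment> \<open>transformations I -> I are probabilities; those of a test sum to 1\<close>
   Trans Th (unitS Th) (unitS Th) \<subseteq> {p *\<^sub>R idt Th (unitS Th) | p. 0 \<le> p \<and> p \<le> 1} \<and>
   idt Th (unitS Th) \<noteq> 0 \<and>
   (\<forall>t \<in> Tests Th (unitS Th) (unitS Th). sum_list t = idt Th (unitS Th)) \<and>
   \<comment> \<open>identification of states, effects and transformations (also on real spans)\<close>
   (\<forall>A x y. x \<in> span (States Th A) \<longrightarrow> y \<in> span (States Th A) \<longrightarrow>
      (\<forall>a \<in> Effects Th A. sq Th a x = sq Th a y) \<longrightarrow> x = y) \<and>
   (\<forall>A x y. x \<in> span (Effects Th A) \<longrightarrow> y \<in> span (Effects Th A) \<longrightarrow>
      (\<forall>\<rho> \<in> States Th A. sq Th x \<rho> = sq Th y \<rho>) \<longrightarrow> x = y) \<and>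
   (\<forall>A B x y. x \<in> span (Trans Th A B) \<longrightarrow> y \<in> span (Trans Th A B) \<longrightarrow>
      (\<forall>S. \<forall>\<rho> \<in> States Th (cmp Th A S).
          sq Th (pr Th x (idt Th S)) \<rho> = sq Th (pr Th y (idt Th S)) \<rho>) \<longrightarrow> x = y) \<and>
   \<comment> \<open>finite dimensionality of the state spaces\<close>
   (\<forall>A. \<exists>F. finite F \<and> span (States Th A) \<subseteq> span F) \<and>
   \<comment> \<open>(i) causality\<close>
   (\<forall>A. [eff Th A] \<in> Tests Th A (unitS Th) \<and>
        (\<forall>a. [a] \<in> Tests Th A (unitS Th) \<longrightarrow> a = eff Th A)) \<and>
   (\<forall>A B. eff Th (cmp Th A B) = pr Th (eff Th A) (eff Th B)) \<and>
   \<comment> \<open>(ii) local discriminability\<close>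
   (\<forall>A B \<rho> \<sigma>. \<rho> \<in> States Th (cmp Th A B) \<longrightarrow> \<sigma> \<in> States Th (cmp Th A B) \<longrightarrow> \<rho> \<noteq> \<sigma> \<longrightarrow>
      (\<exists>a \<in> Effects Th A. \<exists>b \<in> Effects Th B. sq Th (pr Th a b) \<rho> \<noteq> sq Th (pr Th a b) \<sigma>)) \<and>
   \<comment> \<open>(iii) closedness, non-determinism, convexity, perfectly distinguishable states\<close>
   (\<forall>A. closed (States Th A)) \<and>
   (\<exists>p \<in> Trans Th (unitS Th) (unitS Th). p \<noteq> 0 \<and> p \<noteq> idt Th (unitS Th)) \<and>
   (\<forall>A B. convex (Trans Th A B)) \<and>
   (\<exists>A \<rho>0 \<rho>1 a0 a1. \<rho>0 \<in> States1 Th A \<and> \<rho>1 \<in> States1 Th A \<and> [a0, a1] \<in> Tests Th A (unitS Th) \<and>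
      sq Th a0 \<rho>0 = idt Th (unitS Th) \<and> sq Th a1 \<rho>1 = idt Th (unitS Th) \<and>
      sq Th a0 \<rho>1 = 0 \<and> sq Th a1 \<rho>0 = 0)"

definition purification_postulate :: "('s, 't::real_vector) opt \<Rightarrow> bool" where
  "purification_postulate Th \<longleftrightarrow>
   (\<forall>A. \<forall>\<rho> \<in> States1 Th A. \<exists>B \<Psi>. pure Th (cmp Th A B) \<Psi> \<and> \<Psi> \<in> States1 Th (cmp Th A B) \<and>
        marginal Th A B \<Psi> = \<rho>) \<and>
   (\<forall>A B \<Psi> \<Psi>'. \<Psi> \<in> States1 Th (cmp Th A B) \<longrightarrow> \<Psi>' \<in> States1 Th (cmp Th A B) \<longrightarrow>
        pure Th (cmp Th A B) \<Psi> \<longrightarrow> pure Th (cmp Th A B) \<Psi>' \<longrightarrow>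
        marginal Th A B \<Psi> = marginal Th A B \<Psi>' \<longrightarrow>
        (\<exists>U \<in> RevGroup Th B. \<Psi>' = sq Th (pr Th (idt Th A) U) \<Psi>))"

end

theory Submission
  imports Defs
begin

(*
  The map C \<mapsto> R_C is injective by faithfulness;
  the work lies in identifying its images.  The key tool is the steering property of
  purification: every state of B \<tilde>A with marginal \<omega> on \<tilde>A is (V \<otimes> I) \<Psi> for a channel V.
  To realize a whole family of states G_i with marginals adding up to \<omega>, we attach perfectly
  distinguishable "flag" states to them; if the flagged sum is deterministic, steering yields a
  channel into B \<otimes> F, and reading out the flag gives a test whose representatives are the G_i.
*)

locale causal_opt =
  fixes Th :: "('s, 't::real_normed_vector) opt"
  assumes cmp_assoc: "\<And>A B C. cmp Th (cmp Th A B) C = cmp Th A (cmp Th B C)"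
    and cmp_unit_right: "\<And>A. cmp Th A (unitS Th) = A"
    and cmp_unit_left: "\<And>A. cmp Th (unitS Th) A = A"
    and tests_in_trans: "\<And>A B t. t \<in> Tests Th A B \<Longrightarrow> t \<noteq> [] \<and> set t \<subseteq> Trans Th A B"
    and trans_from_tests: "\<And>A B. Trans Th A B = (\<Union>t\<in>Tests Th A B. set t)"
    and identity_test: "\<And>A. [idt Th A] \<in> Tests Th A A"
    and seq_closed: "\<And>A B C f g. f \<in> Trans Th A B \<Longrightarrow> g \<in> Trans Th B C \<Longrightarrow>
      sq Th g f \<in> Trans Th A C"
    and seq_identity: "\<And>A B f. f \<in> Trans Th A B \<Longrightarrow>
      sq Th (idt Th B) f = f \<and> sq Th f (idt Th A) = f"
    and seq_assoc: "\<And>A B C D f g h. f \<in> Trans Th A B \<Longrightarrow> g \<in> Trans Th B C \<Longrightarrow>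
      h \<in> Trans Th C D \<Longrightarrow> sq Th h (sq Th g f) = sq Th (sq Th h g) f"
    and par_closed: "\<And>A B A' B' f g. f \<in> Trans Th A B \<Longrightarrow> g \<in> Trans Th A' B' \<Longrightarrow>
      pr Th f g \<in> Trans Th (cmp Th A A') (cmp Th B B')"
    and idt_cmp: "\<And>A B. idt Th (cmp Th A B) = pr Th (idt Th A) (idt Th B)"
    and interchange: "\<And>A B C A' B' C' f g f' g'. f \<in> Trans Th A B \<Longrightarrow> g \<in> Trans Th B C \<Longrightarrow>
      f' \<in> Trans Th A' B' \<Longrightarrow> g' \<in> Trans Th B' C' \<Longrightarrow>
      sq Th (pr Th g g') (pr Th f f') = pr Th (sq Th g f) (sq Th g' f')"
    and par_assoc: "\<And>A B A' B' A'' B'' f g h. f \<in> Trans Th A B \<Longrightarrow> g \<in> Trans Th A' B' \<Longrightarrow>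
      h \<in> Trans Th A'' B'' \<Longrightarrow> pr Th (pr Th f g) h = pr Th f (pr Th g h)"
    and par_unit: "\<And>A B f. f \<in> Trans Th A B \<Longrightarrow>
      pr Th f (idt Th (unitS Th)) = f \<and> pr Th (idt Th (unitS Th)) f = f"
    and swap: "\<And>A B. channel Th (cmp Th A B) (cmp Th B A) (swp Th A B) \<and>
      sq Th (swp Th B A) (swp Th A B) = idt Th (cmp Th A B)"
    and swap_natural: "\<And>A B A' B' f g. f \<in> Trans Th A B \<Longrightarrow> g \<in> Trans Th A' B' \<Longrightarrow>
      sq Th (swp Th B B') (pr Th f g) = sq Th (pr Th g f) (swp Th A A')"
    and bilinear_seq: "bilinear (sq Th)"
    and bilinear_par: "bilinear (pr Th)"
    and parallel_test: "\<And>A B A' B' t u. t \<in> Tests Th A B \<Longrightarrow> u \<in> Tests Th A' B' \<Longrightarrow>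
      concat (map (\<lambda>f. map (\<lambda>g. pr Th f g) u) t) \<in> Tests Th (cmp Th A A') (cmp Th B B')"
    and conditioned_test: "\<And>A B C t u. t \<in> Tests Th A B \<Longrightarrow> (\<forall>i<length t. u i \<in> Tests Th B C) \<Longrightarrow>
      concat (map (\<lambda>i. map (\<lambda>g. sq Th g (t ! i)) (u i)) [0..<length t]) \<in> Tests Th A C"
    and coarse_graining: "\<And>A B t (f::nat \<Rightarrow> nat) m. t \<in> Tests Th A B \<Longrightarrow>
      (\<forall>i<length t. f i < m) \<Longrightarrow> (\<forall>j<m. \<exists>i<length t. f i = j) \<Longrightarrow>
      map (\<lambda>j. \<Sum>i\<in>{i. i < length t \<and> f i = j}. t ! i) [0..<m] \<in> Tests Th A B"
    and probabilities:
      "Trans Th (unitS Th) (unitS Th) \<subseteq> {p *\<^sub>R idt Th (unitS Th) | p. 0 \<le> p \<and> p \<le> 1}"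
    and idt_unit_nonzero: "idt Th (unitS Th) \<noteq> 0"
    and ident_state: "\<And>A x y. x \<in> span (States Th A) \<Longrightarrow> y \<in> span (States Th A) \<Longrightarrow>
      (\<forall>a \<in> Effects Th A. sq Th a x = sq Th a y) \<Longrightarrow> x = y"
    and ident_eff: "\<And>A x y. x \<in> span (Effects Th A) \<Longrightarrow> y \<in> span (Effects Th A) \<Longrightarrow>
      (\<forall>\<rho> \<in> States Th A. sq Th x \<rho> = sq Th y \<rho>) \<Longrightarrow> x = y"
    and ident_trans: "\<And>A B x y. x \<in> span (Trans Th A B) \<Longrightarrow> y \<in> span (Trans Th A B) \<Longrightarrow>
      (\<forall>S. \<forall>\<rho> \<in> States Th (cmp Th A S).
          sq Th (pr Th x (idt Th S)) \<rho> = sq Th (pr Th y (idt Th S)) \<rho>) \<Longrightarrow> x = y"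
    and causality: "\<And>A. [eff Th A] \<in> Tests Th A (unitS Th) \<and>
      (\<forall>a. [a] \<in> Tests Th A (unitS Th) \<longrightarrow> a = eff Th A)"
    and eff_cmp: "\<And>A B. eff Th (cmp Th A B) = pr Th (eff Th A) (eff Th B)"
    and local_discriminability: "\<And>A B \<rho> \<sigma>. \<rho> \<in> States Th (cmp Th A B) \<Longrightarrow>
      \<sigma> \<in> States Th (cmp Th A B) \<Longrightarrow> \<rho> \<noteq> \<sigma> \<Longrightarrow>
      (\<exists>a \<in> Effects Th A. \<exists>b \<in> Effects Th B. sq Th (pr Th a b) \<rho> \<noteq> sq Th (pr Th a b) \<sigma>)"
    and states_closed: "\<And>A. closed (States Th A)"
    and trans_convex: "\<And>A B. convex (Trans Th A B)"
    and distinguishable_pair: "\<exists>A \<rho>0 \<rho>1 a0 a1. \<rho>0 \<in> States1 Th A \<and> \<rho>1 \<in> States1 Th A \<and>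
      [a0, a1] \<in> Tests Th A (unitS Th) \<and> sq Th a0 \<rho>0 = idt Th (unitS Th) \<and>
      sq Th a1 \<rho>1 = idt Th (unitS Th) \<and> sq Th a0 \<rho>1 = 0 \<and> sq Th a1 \<rho>0 = 0"

lemma opt_framework_causal_opt: "opt_framework Th \<Longrightarrow> causal_opt Th"
  unfolding opt_framework_def causal_opt_def by (elim conjE) (intro conjI; assumption)

text \<open>Indexing into the concatenation of \<open>n\<close> lists of common length \<open>m\<close>: this is how the
  outcomes of a conditioned test are enumerated.\<close>
lemma concat_uniform:
  assumes "\<And>i. i < n \<Longrightarrow> length (f i) = m"
  shows "length (concat (map f [0..<n])) = n * m"
    and "i < n \<Longrightarrow> k < m \<Longrightarrow> concat (map f [0..<n]) ! (i * m + k) = f i ! k"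
proof -
  show len: "length (concat (map f [0..<n])) = n * m"
    using assms by (induction n) auto
  show "i < n \<Longrightarrow> k < m \<Longrightarrow> concat (map f [0..<n]) ! (i * m + k) = f i ! k"
    using assms
  proof (induction n arbitrary: i)
    case 0 then show ?case by simp
  next
    case (Suc n)
    have len: "length (concat (map f [0..<n])) = n * m"
      using Suc.prems(3) by (induction n) auto
    show ?case
    proof (cases "i < n")
      case True
      have "i * m + k < Suc i * m" using Suc.prems(2) by simp
      also have "\<dots> \<le> n * m" using True by (intro mult_le_mono1) simp
      finally have "i * m + k < n * m" .
      then show ?thesis using Suc True by (simp add: nth_append len)
    next
      case False
      then have "i = n" using Suc.prems(1) by simp
      then show ?thesis by (simp add: nth_append len)
    qed
  qed
qed

lemma map_upt_nth: "map (\<lambda>i. f (t ! i)) [0..<length t] = map f t"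
  by (rule nth_equalityI) auto

context causal_opt
begin

abbreviation "Tr \<equiv> Trans Th"
abbreviation "Ts \<equiv> Tests Th"
abbreviation "sc \<equiv> sq Th"
abbreviation "pa \<equiv> pr Th"
abbreviation "ii \<equiv> idt Th"
abbreviation "ee \<equiv> eff Th"
abbreviation "cm \<equiv> cmp Th"
abbreviation "uI \<equiv> unitS Th"
abbreviation "sw \<equiv> swp Th"

declare cmp_assoc [simp] cmp_unit_right [simp] cmp_unit_left [simp]

lemma test_nonempty: "t \<in> Ts A B \<Longrightarrow> t \<noteq> []"
  using tests_in_trans by blast

lemma test_mem: "t \<in> Ts A B \<Longrightarrow> x \<in> set t \<Longrightarrow> x \<in> Tr A B"
  using tests_in_trans by blast

lemma test_nth: "t \<in> Ts A B \<Longrightarrow> i < length t \<Longrightarrow> t ! i \<in> Tr A B"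
  using test_mem nth_mem by blast

lemma single_tr: "[x] \<in> Ts A B \<Longrightarrow> x \<in> Tr A B"
  using test_mem by fastforce

lemma tr_in_test: "x \<in> Tr A B \<Longrightarrow> \<exists>t\<in>Ts A B. \<exists>i<length t. t ! i = x"
  using trans_from_tests by (auto simp: in_set_conv_nth)

lemma id_tr: "ii A \<in> Tr A A"
  using single_tr[OF identity_test] .

lemma sq_idl [simp]: "f \<in> Tr A B \<Longrightarrow> sc (ii B) f = f"
  using seq_identity by blast

lemma sq_idr [simp]: "f \<in> Tr A B \<Longrightarrow> sc f (ii A) = f"
  using seq_identity by blast

lemma pr_unitR [simp]: "f \<in> Tr A B \<Longrightarrow> pa f (ii uI) = f"
  using par_unit by blast

lemma pr_unitL [simp]: "f \<in> Tr A B \<Longrightarrow> pa (ii uI) f = f"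
  using par_unit by blast

lemma id_id [simp]: "sc (ii A) (ii A) = ii A"
  using sq_idl[OF id_tr] .

lemma swap_inv: "sc (sw B A) (sw A B) = ii (cm A B)"
  using swap by blast

lemma sw_tr: "sw A B \<in> Tr (cm A B) (cm B A)"
  using swap by (simp add: channel_def)

lemma sw_channel: "sc (ee (cm B A)) (sw A B) = ee (cm A B)"
  using swap by (simp add: channel_def)

lemma eff_test: "[ee A] \<in> Ts A uI"
  using causality by blast

lemma eff_unique: "[a] \<in> Ts A uI \<Longrightarrow> a = ee A"
  using causality by blast

lemma eff_tr: "ee A \<in> Tr A uI"
  using single_tr[OF eff_test] .

lemma eff_id [simp]: "sc (ee A) (ii A) = ee A" using sq_idr[OF eff_tr] .
lemma id_eff [simp]: "sc (ii uI) (ee A) = ee A" using sq_idl[OF eff_tr] .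
lemma eff_par_unit [simp]: "pa (ee A) (ii uI) = ee A" using pr_unitR[OF eff_tr] .
lemma unit_par_eff [simp]: "pa (ii uI) (ee A) = ee A" using pr_unitL[OF eff_tr] .
lemma unit_par_id [simp]: "pa (ii uI) (ii X) = ii X" using pr_unitL[OF id_tr] .

lemma probability: "x \<in> Tr uI uI \<Longrightarrow> \<exists>p\<ge>0. p \<le> 1 \<and> x = p *\<^sub>R ii uI"
  using probabilities by blast

lemma prob_scale_inj: "p *\<^sub>R ii uI = q *\<^sub>R ii uI \<Longrightarrow> p = q"
  using idt_unit_nonzero by simp

lemma sc0l [simp]: "sc 0 x = 0" using bilinear_lzero[OF bilinear_seq] .
lemma sc0r [simp]: "sc x 0 = 0" using bilinear_rzero[OF bilinear_seq] .
lemma pa0l [simp]: "pa 0 x = 0" using bilinear_lzero[OF bilinear_par] .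
lemma pa0r [simp]: "pa x 0 = 0" using bilinear_rzero[OF bilinear_par] .
lemma sc_addl: "sc (x + y) z = sc x z + sc y z" using bilinear_ladd[OF bilinear_seq] .
lemma sc_addr: "sc z (x + y) = sc z x + sc z y" using bilinear_radd[OF bilinear_seq] .
lemma pa_addl: "pa (x + y) z = pa x z + pa y z" using bilinear_ladd[OF bilinear_par] .
lemma pa_addr: "pa z (x + y) = pa z x + pa z y" using bilinear_radd[OF bilinear_par] .
lemma sc_scl [simp]: "sc (c *\<^sub>R x) y = c *\<^sub>R sc x y" using bilinear_lmul[OF bilinear_seq] .
lemma sc_scr [simp]: "sc x (c *\<^sub>R y) = c *\<^sub>R sc x y" using bilinear_rmul[OF bilinear_seq] .
lemma pa_scl [simp]: "pa (c *\<^sub>R x) y = c *\<^sub>R pa x y" using bilinear_lmul[OF bilinear_par] .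
lemma pa_scr [simp]: "pa x (c *\<^sub>R y) = c *\<^sub>R pa x y" using bilinear_rmul[OF bilinear_par] .

lemma sc_suml: "sc (sum f K) y = (\<Sum>i\<in>K. sc (f i) y)"
  by (induction K rule: infinite_finite_induct) (auto simp: sc_addl)

lemma sc_sumr: "sc y (sum f K) = (\<Sum>i\<in>K. sc y (f i))"
  by (induction K rule: infinite_finite_induct) (auto simp: sc_addr)

lemma pa_suml: "pa (sum f K) y = (\<Sum>i\<in>K. pa (f i) y)"
  by (induction K rule: infinite_finite_induct) (auto simp: pa_addl)

lemma sc_sumlistl: "sc (sum_list xs) y = sum_list (map (\<lambda>x. sc x y) xs)"
  by (induction xs) (auto simp: sc_addl)

lemma pa_sumlistl: "pa (sum_list xs) y = sum_list (map (\<lambda>x. pa x y) xs)"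
  by (induction xs) (auto simp: pa_addl)

lemma pa_sumlistr: "pa y (sum_list xs) = sum_list (map (pa y) xs)"
  by (induction xs) (auto simp: pa_addr)

lemma scpa_comp:
  assumes "f \<in> Tr A A'" "g \<in> Tr A' A''" "h \<in> Tr B B'" "k \<in> Tr B' B''" "\<rho> \<in> Tr Z (cm A B)"
  shows "sc (pa g k) (sc (pa f h) \<rho>) = sc (pa (sc g f) (sc k h)) \<rho>"
  using seq_assoc[OF assms(5) par_closed[OF assms(1,3)] par_closed[OF assms(2,4)]]
    interchange[OF assms(1-4)] by simp

lemma comp_id_left:
  assumes "f \<in> Tr A B" "g \<in> Tr B C" "\<rho> \<in> Tr Z (cm P A)"
  shows "sc (pa (ii P) g) (sc (pa (ii P) f) \<rho>) = sc (pa (ii P) (sc g f)) \<rho>"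
  using scpa_comp[OF id_tr id_tr assms] by simp

lemma prod_apply:
  assumes "\<psi> \<in> Tr uI X" "\<phi> \<in> Tr uI Y" "g \<in> Tr X X'" "h \<in> Tr Y Y'"
  shows "sc (pa g h) (pa \<psi> \<phi>) = pa (sc g \<psi>) (sc h \<phi>)"
  using interchange[OF assms(1,3,2,4)] .

lemma prod_tr: "\<psi> \<in> Tr uI X \<Longrightarrow> \<phi> \<in> Tr uI Y \<Longrightarrow> pa \<psi> \<phi> \<in> Tr uI (cm X Y)"
  using par_closed[of \<psi> uI X \<phi> uI Y] by simp

lemma idc_assoc: "f \<in> Tr A B \<Longrightarrow> pa (ii (cm P Q)) f = pa (ii P) (pa (ii Q) f)"
  by (simp only: idt_cmp par_assoc[OF id_tr id_tr])

lemma cond_idx: "t \<in> Ts A B \<Longrightarrow> (\<And>i. i < length t \<Longrightarrow> [y i] \<in> Ts B C) \<Longrightarrow>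
   map (\<lambda>i. sc (y i) (t ! i)) [0..<length t] \<in> Ts A C"
  using conditioned_test[of t A B "\<lambda>i. [y i]" C] by simp

lemma cond_map: "t \<in> Ts A B \<Longrightarrow> [y] \<in> Ts B C \<Longrightarrow> map (sc y) t \<in> Ts A C"
  using cond_idx[of t A B "\<lambda>i. y" C] by (simp add: map_upt_nth)

lemma cond_single: "[x] \<in> Ts A B \<Longrightarrow> u \<in> Ts B C \<Longrightarrow> map (\<lambda>g. sc g x) u \<in> Ts A C"
  using conditioned_test[of "[x]" A B "\<lambda>i. u" C] by simp

lemma par_r: "t \<in> Ts A B \<Longrightarrow> [g] \<in> Ts A' B' \<Longrightarrow> map (\<lambda>f. pa f g) t \<in> Ts (cm A A') (cm B B')"
  using parallel_test[of t A B "[g]" A' B'] by simp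

lemma par_l: "[f] \<in> Ts A B \<Longrightarrow> u \<in> Ts A' B' \<Longrightarrow> map (pa f) u \<in> Ts (cm A A') (cm B B')"
  using parallel_test[of "[f]" A B u A' B'] by simp

lemma par_single: "[f] \<in> Ts A B \<Longrightarrow> [g] \<in> Ts A' B' \<Longrightarrow> [pa f g] \<in> Ts (cm A A') (cm B B')"
  using par_l[of f A B "[g]"] by simp

lemma sq_single: "[f] \<in> Ts A B \<Longrightarrow> [g] \<in> Ts B C \<Longrightarrow> [sc g f] \<in> Ts A C"
  using cond_map[of "[f]" A B g C] by simp

lemma coarse_all: "t \<in> Ts A B \<Longrightarrow> [sum_list t] \<in> Ts A B"
proof -
  assume t: "t \<in> Ts A B"
  have "map (\<lambda>j. \<Sum>i\<in>{i. i < length t \<and> (0::nat) = j}. t ! i) [0..<1] \<in> Ts A B"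
    using coarse_graining[of t A B "\<lambda>_. 0" 1] t test_nonempty[OF t] by auto
  moreover have "{i. i < length t \<and> (0::nat) = 0} = {0..<length t}" by auto
  ultimately show ?thesis by (simp add: sum_list_sum_nth)
qed

lemma coarse_two_blocks:
  assumes t: "t \<in> Ts A B" and Y: "Y0 \<subseteq> {..<length t}" "Y0 \<noteq> {}" "Y0 \<noteq> {..<length t}"
  shows "[\<Sum>i\<in>Y0. t ! i, \<Sum>i\<in>{..<length t} - Y0. t ! i] \<in> Ts A B"
proof -
  define f where "f i = (if i \<in> Y0 then 0 else (1::nat))" for i
  obtain i1 where "i1 < length t" "i1 \<notin> Y0" using Y by auto
  then have "\<forall>j<2. \<exists>i<length t. f i = j"
    using Y by (auto simp: f_def less_2_cases_iff)
  then have "map (\<lambda>j. \<Sum>i\<in>{i. i < length t \<and> f i = j}. t ! i) [0..<2] \<in> Ts A B"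
    using coarse_graining[OF t] by (simp add: f_def)
  moreover have "{i. i < length t \<and> f i = 0} = Y0" using Y by (auto simp: f_def)
  moreover have "{i. i < length t \<and> f i = 1} = {..<length t} - Y0" by (auto simp: f_def)
  ultimately show ?thesis by (simp add: upt_rec)
qed

lemma eff_unit: "ee uI = ii uI"
  using eff_unique[OF identity_test] by simp

lemma test_eff_sum: "t \<in> Ts A B \<Longrightarrow> sum_list (map (sc (ee B)) t) = ee A"
  using eff_unique[OF coarse_all[OF cond_map[OF _ eff_test]]] by simp

lemma obs_test_sum: "t \<in> Ts A uI \<Longrightarrow> sum_list t = ee A"
proof -
  assume t: "t \<in> Ts A uI"
  have "map (sc (ee uI)) t = t"
    using test_mem[OF t] by (auto simp: eff_unit intro!: map_idI sq_idl)
  then show ?thesis using test_eff_sum[OF t] by simp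
qed

lemma test_channel: "[x] \<in> Ts A B \<Longrightarrow> sc (ee B) x = ee A"
  using test_eff_sum[of "[x]"] by simp

lemma sum_map_nth: "sum_list (map f t) = (\<Sum>i<length t. f (t ! i))"
  by (simp add: sum_list_sum_nth atLeast0LessThan)

lemma nonneg_sum0:
  assumes K: "finite K" and x: "\<And>i. i \<in> K \<Longrightarrow> x i \<in> Tr uI uI" and s: "sum x K = 0"
    and i0: "i0 \<in> K"
  shows "x i0 = 0"
proof -
  have "\<forall>i\<in>K. \<exists>p. p \<ge> 0 \<and> x i = p *\<^sub>R ii uI" using probability x by blast
  then obtain p where p: "\<And>i. i \<in> K \<Longrightarrow> p i \<ge> 0 \<and> x i = p i *\<^sub>R ii uI"
    by metis
  have "sum x K = (\<Sum>i\<in>K. p i) *\<^sub>R ii uI"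
    by (simp add: scaleR_sum_left p)
  then have "(\<Sum>i\<in>K. p i) = 0" using s idt_unit_nonzero by simp
  then have "p i0 = 0" using sum_nonneg_eq_0_iff[OF K] p i0 by blast
  then show ?thesis using p i0 by simp
qed

lemma state_zero:
  assumes r: "\<rho> \<in> States Th A" and e: "sc (ee A) \<rho> = 0"
  shows "\<rho> = 0"
proof (rule ident_state)
  show "\<rho> \<in> span (States Th A)" "0 \<in> span (States Th A)"
    using r by (simp_all add: span_base span_zero)
  show "\<forall>a\<in>Effects Th A. sc a \<rho> = sc a 0"
  proof
    fix a assume "a \<in> Effects Th A"
    then obtain T k where T: "T \<in> Ts A uI" "k < length T" "T ! k = a"
      using tr_in_test by (metis Effects_def)
    have "(\<Sum>i\<in>{0..<length T}. sc (T ! i) \<rho>) = 0"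
      using obs_test_sum[OF T(1)] e by (simp add: sum_list_sum_nth sc_suml[symmetric])
    then have "sc (T ! k) \<rho> = 0"
      using nonneg_sum0[of "{0..<length T}" "\<lambda>i. sc (T ! i) \<rho>" k] T r test_nth seq_closed
      by (auto simp: States_def)
    then show "sc a \<rho> = sc a 0" using T by simp
  qed
qed

lemma trans_zero:
  assumes X: "X \<in> Tr A B" and e: "sc (ee B) X = 0"
  shows "X = 0"
proof (rule ident_trans)
  show "X \<in> span (Tr A B)" "0 \<in> span (Tr A B)"
    using X by (simp_all add: span_base span_zero)
  show "\<forall>S. \<forall>\<rho>\<in>States Th (cm A S). sc (pa X (ii S)) \<rho> = sc (pa 0 (ii S)) \<rho>"
  proof (intro allI ballI)
    fix S \<rho> assume r: "\<rho> \<in> States Th (cm A S)"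
    have z: "sc (pa X (ii S)) \<rho> \<in> States Th (cm B S)"
      using r seq_closed[OF _ par_closed[OF X id_tr]] by (auto simp: States_def)
    have "sc (ee (cm B S)) (sc (pa X (ii S)) \<rho>) = sc (pa (sc (ee B) X) (sc (ee S) (ii S))) \<rho>"
      using scpa_comp[OF X eff_tr id_tr eff_tr, of \<rho> uI] r by (simp add: eff_cmp States_def)
    then have "sc (pa X (ii S)) \<rho> = 0" using state_zero[OF z] e by simp
    then show "sc (pa X (ii S)) \<rho> = sc (pa 0 (ii S)) \<rho>" by simp
  qed
qed

lemma eff_zero:
  assumes K: "finite K" and a: "\<And>i. i \<in> K \<Longrightarrow> a i \<in> Tr A uI" and s: "sum a K = 0"
    and i0: "i0 \<in> K"
  shows "a i0 = 0"
proof (rule ident_eff)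
  show "a i0 \<in> span (Effects Th A)" "0 \<in> span (Effects Th A)"
    using a i0 by (simp_all add: Effects_def span_base span_zero)
  show "\<forall>\<rho>\<in>States Th A. sc (a i0) \<rho> = sc 0 \<rho>"
  proof
    fix \<rho> assume r: "\<rho> \<in> States Th A"
    have "sc (a i0) \<rho> = 0"
    proof (rule nonneg_sum0[OF K _ _ i0])
      show "\<And>i. i \<in> K \<Longrightarrow> sc (a i) \<rho> \<in> Tr uI uI" using a r seq_closed by (auto simp: States_def)
      show "(\<Sum>i\<in>K. sc (a i) \<rho>) = 0" using s by (simp add: sc_suml[symmetric])
    qed
    then show "sc (a i0) \<rho> = sc 0 \<rho>" by simp
  qed
qed

text \<open>The zero transformation exists (it is a distinguishing effect applied to the wrong
  state), and by convexity every transformation can be rescaled by a factor in [0,1].\<close>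
lemma zero_unit: "0 \<in> Tr uI uI"
proof -
  obtain A0 \<rho>1 a0 a1 where d: "\<rho>1 \<in> States1 Th A0" "[a0, a1] \<in> Ts A0 uI" "sc a0 \<rho>1 = 0"
    using distinguishable_pair by blast
  have "a0 \<in> Tr A0 uI" using d(2) test_mem by fastforce
  moreover have "\<rho>1 \<in> Tr uI A0" using d(1) by (simp add: States1_def States_def)
  ultimately show ?thesis using seq_closed d(3) by metis
qed

lemma zero_tr: "f \<in> Tr A B \<Longrightarrow> 0 \<in> Tr A B"
  using par_closed[of f A B 0 uI uI] zero_unit by simp

lemma scale_tr: "f \<in> Tr A B \<Longrightarrow> 0 \<le> c \<Longrightarrow> c \<le> 1 \<Longrightarrow> c *\<^sub>R f \<in> Tr A B"
  using convexD_alt[OF trans_convex zero_tr, of f A B f c] by simp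

lemma sub_sum_tr:
  assumes t: "t \<in> Ts A B" and Y: "Y0 \<subseteq> {..<length t}"
  shows "(\<Sum>i\<in>Y0. t ! i) \<in> Tr A B"
proof -
  have t0: "t ! 0 \<in> Tr A B" using test_nth[OF t] test_nonempty[OF t] by simp
  consider "Y0 = {}" | "Y0 = {..<length t}" | "Y0 \<noteq> {}" "Y0 \<noteq> {..<length t}" by blast
  then show ?thesis
  proof cases
    case 1 then show ?thesis using zero_tr[OF t0] by simp
  next
    case 2 then show ?thesis using single_tr[OF coarse_all[OF t]]
      by (simp add: sum_list_sum_nth atLeast0LessThan)
  next
    case 3 then show ?thesis using coarse_two_blocks[OF t Y] test_mem by fastforce
  qed
qed

text \<open>In a test containing a channel, all other outcomes are discarded with probability
  zero and hence vanish.\<close>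
lemma channel_test:
  assumes x: "x \<in> Tr A B" and e: "sc (ee B) x = ee A"
  shows "[x] \<in> Ts A B"
proof -
  obtain t k where t: "t \<in> Ts A B" "k < length t" "t ! k = x" using tr_in_test[OF x] by blast
  define rest where "rest = {..<length t} - {k}"
  have kn: "k \<in> {..<length t}" using t by simp
  have split: "(\<Sum>i<length t. f (t ! i)) = f x + (\<Sum>i\<in>rest. f (t ! i))" for f :: "'t \<Rightarrow> 't"
    using sum.remove[OF _ kn, of "\<lambda>i. f (t ! i)"] t by (simp add: rest_def)
  have Z: "(\<Sum>i\<in>rest. sc (ee B) (t ! i)) = 0"
    using test_eff_sum[OF t(1)] split[of "sc (ee B)"] e by (simp add: sum_map_nth)
  have "sc (ee B) (t ! i) = 0" if "i \<in> rest" for i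
  proof (rule eff_zero[OF _ _ Z that])
    show "finite rest" by (simp add: rest_def)
    show "sc (ee B) (t ! j) \<in> Tr A uI" if "j \<in> rest" for j
      using that seq_closed[OF test_nth[OF t(1)] eff_tr] by (simp add: rest_def)
  qed
  then have "t ! i = 0" if "i \<in> rest" for i
    using trans_zero[OF test_nth[OF t(1)]] that by (simp add: rest_def)
  then have "sum_list t = x"
    using split[of "\<lambda>y. y"] by (simp add: sum_list_sum_nth atLeast0LessThan)
  then show ?thesis using coarse_all[OF t(1)] by simp
qed

lemma states1_test: "\<rho> \<in> States1 Th A \<Longrightarrow> [\<rho>] \<in> Ts uI A"
  by (rule channel_test) (auto simp: States1_def States_def eff_unit)

lemma test_states1: "[\<rho>] \<in> Ts uI A \<Longrightarrow> \<rho> \<in> States1 Th A"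
  using test_channel[of \<rho> uI A] single_tr[of \<rho> uI A] by (simp add: States1_def States_def eff_unit)

lemma channel_state: "\<Phi> \<in> States1 Th Z \<Longrightarrow> [V] \<in> Ts Z Z' \<Longrightarrow> sc V \<Phi> \<in> States1 Th Z'"
  using test_states1 sq_single states1_test by blast

lemma channel_eff: "[V] \<in> Ts X Y \<Longrightarrow> G \<in> Tr uI X \<Longrightarrow> sc (ee Y) (sc V G) = sc (ee X) G"
  using seq_assoc[OF _ single_tr eff_tr] test_channel by metis

lemma state_prob: "\<rho> \<in> States Th A \<Longrightarrow> \<exists>p\<ge>0. p \<le> 1 \<and> sc (ee A) \<rho> = p *\<^sub>R ii uI"
  using probability seq_closed eff_tr by (metis States_def)

text \<open>One step of the normalization procedure: if the outcome \<open>\<rho>\<close> of a preparation test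
  occurs with probability \<open>p\<close>, then conditioning on that test (keep \<open>\<rho>\<close>, replace every
  other outcome by the deterministic state \<open>s\<close>) yields the deterministic state
  \<open>\<rho> + (1 - p) s\<close>.\<close>
lemma mix_deterministic:
  assumes t: "t \<in> Ts uI A" "k < length t" "t ! k = \<rho>"
    and e: "sc (ee A) \<rho> = p *\<^sub>R ii uI" and s: "[s] \<in> Ts uI A"
  shows "[\<rho> + (1 - p) *\<^sub>R s] \<in> Ts uI A"
proof -
  define rest where "rest = {..<length t} - {k}"
  have kn: "k \<in> {..<length t}" using t by simp
  have "(\<Sum>i<length t. sc (ee A) (t ! i)) = ii uI"
    using test_eff_sum[OF t(1)] by (simp add: sum_map_nth eff_unit)
  then have R: "(\<Sum>i\<in>rest. sc (ee A) (t ! i)) = (1 - p) *\<^sub>R ii uI"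
    using sum.remove[OF _ kn, of "\<lambda>i. sc (ee A) (t ! i)"] t e
    by (simp add: rest_def algebra_simps)
  define y where "y i = (if i = k then ii A else sc s (ee A))" for i
  have "[y i] \<in> Ts A A" for i
    using identity_test sq_single[OF eff_test s] by (simp add: y_def eff_unit)
  then have T: "map (\<lambda>i. sc (y i) (t ! i)) [0..<length t] \<in> Ts uI A"
    using cond_idx[OF t(1)] by blast
  have sT: "s \<in> Tr uI A" using single_tr[OF s] .
  have rT: "\<rho> \<in> Tr uI A" using test_nth[OF t(1,2)] t(3) by simp
  have "(\<Sum>i\<in>rest. sc (y i) (t ! i)) = (\<Sum>i\<in>rest. sc s (sc (ee A) (t ! i)))"
    using seq_assoc[OF test_nth[OF t(1)] eff_tr sT] by (intro sum.cong) (auto simp: y_def rest_def)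
  also have "\<dots> = (1 - p) *\<^sub>R s" using R sT by (simp add: sc_sumr[symmetric])
  finally have "sum_list (map (\<lambda>i. sc (y i) (t ! i)) [0..<length t]) = \<rho> + (1 - p) *\<^sub>R s"
    using sum.remove[OF _ kn, of "\<lambda>i. sc (y i) (t ! i)"] t rT
    by (simp add: sum_list_sum_nth atLeast0LessThan rest_def y_def)
  then show ?thesis using coarse_all[OF T] by simp
qed

text \<open>Iterating the mixing step produces deterministic
  states converging to \<open>\<rho>/p\<close>; closedness of the state space gives the limit.\<close>
lemma normalize:
  assumes r: "\<rho> \<in> States Th A" and e: "sc (ee A) \<rho> = p *\<^sub>R ii uI" and p: "p > 0"
  shows "[(1/p) *\<^sub>R \<rho>] \<in> Ts uI A"
proof -
  obtain t k where t: "t \<in> Ts uI A" "k < length t" "t ! k = \<rho>"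
    using tr_in_test r by (metis States_def)
  have p1: "p \<le> 1" using state_prob[OF r] e prob_scale_inj by metis
  define q where "q = 1 - p"
  define s0 where "s0 = sum_list t"
  define f where "f m = ((1 - q ^ m) / p) *\<^sub>R \<rho> + q ^ m *\<^sub>R s0" for m
  have ft: "[f m] \<in> Ts uI A" for m
  proof (induction m)
    case 0 then show ?case using coarse_all[OF t(1)] by (simp add: f_def s0_def)
  next
    case (Suc m)
    have "(1 - q ^ Suc m) / p = 1 + q * ((1 - q ^ m) / p)"
      using p by (simp add: field_simps q_def)
    then have "f (Suc m) = \<rho> + q *\<^sub>R f m" by (simp add: f_def algebra_simps)
    then show ?case using mix_deterministic[OF t e Suc] by (simp add: q_def)
  qed
  have "norm q < 1" using p p1 by (simp add: q_def)
  then have "f \<longlonglongrightarrow> ((1 - 0) / p) *\<^sub>R \<rho> + 0 *\<^sub>R s0"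
    unfolding f_def using p by (intro tendsto_intros LIMSEQ_power_zero) auto
  then have "(1/p) *\<^sub>R \<rho> \<in> States Th A"
    using closed_sequentially[OF states_closed, of f] ft single_tr by (auto simp: States_def)
  then show ?thesis
    by (intro channel_test) (use e p in \<open>auto simp: States_def eff_unit\<close>)
qed

text \<open>The witnessing test
  is the conditioned test "first \<open>t\<close>, then \<open>u\<close>".\<close>
lemma refine_post:
  assumes D: "refines Th uI A D \<rho>" and u: "u \<in> Ts A B" and k0: "k0 < length u"
  shows "refines Th uI B (sc (u ! k0) D) (sc (sum_list u) \<rho>)"
proof -
  obtain t Y0 j0 where t: "t \<in> Ts uI A" "Y0 \<subseteq> {..<length t}" "\<rho> = (\<Sum>j\<in>Y0. t ! j)"
    "j0 \<in> Y0" "D = t ! j0"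
    using D unfolding refines_def by blast
  define m where "m = length u"
  define T where "T = concat (map (\<lambda>i. map (\<lambda>g. sc g (t ! i)) u) [0..<length t])"
  note TU = concat_uniform[of "length t" "\<lambda>i. map (\<lambda>g. sc g (t ! i)) u" m, folded T_def]
  have T: "T \<in> Ts uI B" unfolding T_def by (rule conditioned_test[OF t(1)]) (use u in auto)
  have nthT: "T ! (i * m + k) = sc (u ! k) (t ! i)" if "i < length t" "k < m" for i k
    using TU(2)[OF _ that] that by (simp add: m_def)
  define g where "g = (\<lambda>(i, k). i * m + k)"
  define Y1 where "Y1 = g ` (Y0 \<times> {..<m})"
  have inj: "inj_on g (Y0 \<times> {..<m})"
  proof (rule inj_onI, clarsimp simp: g_def)
    fix i k i' k' assume "k < m" "k' < m" "i * m + k = i' * m + k'"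
    then have "(i * m + k) div m = (i' * m + k') div m" "(i * m + k) mod m = (i' * m + k') mod m"
      by auto
    then show "i = i' \<and> k = k'" using \<open>k < m\<close> \<open>k' < m\<close> by simp
  qed
  have Y1sub: "Y1 \<subseteq> {..<length T}"
  proof
    fix x assume "x \<in> Y1"
    then obtain i k where ik: "i < length t" "k < m" "x = i * m + k"
      using t(2) by (auto simp: Y1_def g_def)
    have "i * m + k < Suc i * m" using ik(2) by simp
    also have "\<dots> \<le> length t * m" using ik(1) by (intro mult_le_mono1) simp
    finally show "x \<in> {..<length T}" using ik TU(1) by (simp add: m_def)
  qed
  have "(\<Sum>x\<in>Y1. T ! x) = (\<Sum>p\<in>Y0 \<times> {..<m}. T ! (g p))"
    unfolding Y1_def using sum.reindex[OF inj] by (simp add: comp_def)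
  also have "\<dots> = (\<Sum>p\<in>Y0 \<times> {..<m}. sc (u ! snd p) (t ! fst p))"
    by (rule sum.cong) (use t(2) in \<open>auto simp: g_def nthT\<close>)
  also have "\<dots> = (\<Sum>i\<in>Y0. \<Sum>k<m. sc (u ! k) (t ! i))"
    unfolding sum.cartesian_product by (rule sum.cong) auto
  also have "\<dots> = sc (sum_list u) \<rho>"
    by (simp add: sum_list_sum_nth atLeast0LessThan sc_suml sc_sumr t(3) m_def)
  finally have S: "(\<Sum>x\<in>Y1. T ! x) = sc (sum_list u) \<rho>" .
  have "j0 * m + k0 \<in> Y1" using t(4) k0 by (auto simp: Y1_def g_def m_def)
  moreover have "T ! (j0 * m + k0) = sc (u ! k0) D"
    using t(2,4,5) k0 nthT by (auto simp: m_def)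
  ultimately show ?thesis unfolding refines_def using T Y1sub S by (metis image_eqI)
qed

lemma refine_channel:
  "refines Th uI A D \<rho> \<Longrightarrow> [g] \<in> Ts A B \<Longrightarrow> refines Th uI B (sc g D) (sc g \<rho>)"
  using refine_post[of A D \<rho> "[g]" B 0] by simp

lemma refines_state: "refines Th uI A D \<rho> \<Longrightarrow> D \<in> Tr uI A"
  unfolding refines_def using test_nth by fastforce

lemma pure_tr: "pure Th A \<rho> \<Longrightarrow> \<rho> \<in> Tr uI A"
  by (simp add: pure_def States_def)

lemma pureD: "pure Th A \<rho> \<Longrightarrow> refines Th uI A D \<rho> \<Longrightarrow> \<exists>c\<ge>0. c \<le> 1 \<and> D = c *\<^sub>R \<rho>"
  unfolding pure_def atomic_def by blast

lemma pure_reversible: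
  assumes P: "pure Th (cm X Y) \<Phi>" and U: "U \<in> Tr Y Z" and W: "[W] \<in> Ts Z Y"
    and WU: "sc W U = ii Y" and UW: "sc U W = ii Z"
  shows "pure Th (cm X Z) (sc (pa (ii X) U) \<Phi>)"
proof -
  have PhiT: "\<Phi> \<in> Tr uI (cm X Y)" using pure_tr[OF P] .
  have WT: "W \<in> Tr Z Y" using single_tr[OF W] .
  have inv_left: "sc (pa (ii X) U) (sc (pa (ii X) W) E) = E" if "E \<in> Tr uI (cm X Z)" for E
    using comp_id_left[OF WT U that] UW that by (simp add: idt_cmp[symmetric])
  have fwd: "sc (pa (ii X) W) (sc (pa (ii X) U) \<Phi>) = \<Phi>"
    using comp_id_left[OF U WT PhiT] WU PhiT by (simp add: idt_cmp[symmetric])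
  have "atomic Th uI (cm X Z) (sc (pa (ii X) U) \<Phi>)"
    unfolding atomic_def
  proof (intro allI impI)
    fix D assume D: "refines Th uI (cm X Z) D (sc (pa (ii X) U) \<Phi>)"
    have "refines Th uI (cm X Y) (sc (pa (ii X) W) D) \<Phi>"
      using refine_channel[OF D par_single[OF identity_test W]] fwd by simp
    then obtain c where "0 \<le> c" "c \<le> 1" "sc (pa (ii X) W) D = c *\<^sub>R \<Phi>"
      using pureD[OF P] by blast
    moreover have "D = sc (pa (ii X) U) (sc (pa (ii X) W) D)"
      using inv_left[OF refines_state[OF D]] by simp
    ultimately show "\<exists>c. 0 \<le> c \<and> c \<le> 1 \<and> D = c *\<^sub>R sc (pa (ii X) U) \<Phi>" by auto
  qed
  then show ?thesis
    using seq_closed[OF PhiT par_closed[OF id_tr U]] by (simp add: pure_def States_def)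
qed

lemma prod_states1:
  assumes "\<psi> \<in> States1 Th X" "\<phi> \<in> States1 Th Y"
  shows "pa \<psi> \<phi> \<in> States1 Th (cm X Y)"
  using test_states1[of "pa \<psi> \<phi>"] par_single[OF states1_test[OF assms(1)] states1_test[OF assms(2)]]
  by simp

lemma eff_pair_factor:
  assumes a: "a \<in> Tr X uI" and b: "b \<in> Tr Y uI" and D: "D \<in> Tr uI (cm X Y)"
  shows "sc (pa a b) D = sc a (sc (pa (ii X) b) D)"
    and "sc (pa a b) D = sc b (sc (pa a (ii Y)) D)"
  using scpa_comp[OF id_tr a b id_tr D] scpa_comp[OF a id_tr id_tr b D] a b by simp_all

lemma refine_partial_eff:
  assumes D: "refines Th uI (cm X Y) D \<rho>" and b: "b \<in> Tr Y uI"
  shows "refines Th uI X (sc (pa (ii X) b) D) (sc (pa (ii X) (ee Y)) \<rho>)"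
proof -
  obtain Tb kb where Tb: "Tb \<in> Ts Y uI" "kb < length Tb" "Tb ! kb = b"
    using tr_in_test[OF b] by blast
  have u: "map (pa (ii X)) Tb \<in> Ts (cm X Y) X" using par_l[OF identity_test Tb(1)] by simp
  have "sum_list (map (pa (ii X)) Tb) = pa (ii X) (ee Y)"
    using obs_test_sum[OF Tb(1)] by (simp add: pa_sumlistr[symmetric])
  then show ?thesis using refine_post[OF D u, of kb] Tb by simp
qed

text \<open>A state of \<open>X Y\<close> whose partial images under effects on \<open>Y\<close> are all proportional to a
  normalized \<open>\<psi>\<close>, and whose marginal on \<open>Y\<close> is \<open>\<nu> \<phi>\<close>, equals \<open>\<nu> (\<psi> \<otimes> \<phi>)\<close>: both give the
  same probabilities on all product effects, so local discriminability applies.\<close>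
lemma product_from_partials:
  assumes psT: "\<psi> \<in> Tr uI X" and eps: "sc (ee X) \<psi> = ii uI" and phT: "\<phi> \<in> Tr uI Y"
    and DT: "D \<in> Tr uI (cm X Y)" and nu: "0 \<le> \<nu>" "\<nu> \<le> 1"
    and mu: "\<And>b. b \<in> Tr Y uI \<Longrightarrow> \<exists>\<mu>. sc (pa (ii X) b) D = \<mu> *\<^sub>R \<psi>"
    and DY: "sc (pa (ee X) (ii Y)) D = \<nu> *\<^sub>R \<phi>"
  shows "D = \<nu> *\<^sub>R pa \<psi> \<phi>"
proof (rule ccontr)
  assume "D \<noteq> \<nu> *\<^sub>R pa \<psi> \<phi>"
  then obtain a b where a: "a \<in> Tr X uI" and b: "b \<in> Tr Y uI"
    and neq: "sc (pa a b) D \<noteq> sc (pa a b) (\<nu> *\<^sub>R pa \<psi> \<phi>)"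
    using local_discriminability[of D X Y "\<nu> *\<^sub>R pa \<psi> \<phi>"] DT
      scale_tr[OF prod_tr[OF psT phT] nu] by (auto simp: States_def Effects_def)
  obtain \<mu> where m: "sc (pa (ii X) b) D = \<mu> *\<^sub>R \<psi>" using mu[OF b] by blast
  obtain \<alpha> where al: "sc a \<psi> = \<alpha> *\<^sub>R ii uI" using probability seq_closed[OF psT a] by blast
  obtain \<beta> where be: "sc b \<phi> = \<beta> *\<^sub>R ii uI" using probability seq_closed[OF phT b] by blast
  have "\<mu> *\<^sub>R ii uI = \<nu> *\<^sub>R sc b \<phi>"
    using eff_pair_factor[OF eff_tr b DT] m DY eps by simp
  then have "\<mu> = \<nu> * \<beta>" using be prob_scale_inj by simp
  then have "sc (pa a b) D = (\<nu> * \<beta> * \<alpha>) *\<^sub>R ii uI"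
    using eff_pair_factor(1)[OF a b DT] m al by simp
  moreover have "sc (pa a b) (\<nu> *\<^sub>R pa \<psi> \<phi>) = (\<nu> * \<beta> * \<alpha>) *\<^sub>R ii uI"
    using prod_apply[OF psT phT a b] al be pr_unitR[OF id_tr] by simp
  ultimately show False using neq by simp
qed

text \<open>The product of two normalized pure states is pure: a refinement \<open>D\<close> of \<open>\<psi> \<otimes> \<phi>\<close> has
  partial images refining \<open>\<psi>\<close> resp. \<open>\<phi>\<close>, hence proportional to them.\<close>
lemma pure_prod:
  assumes s1: "\<psi> \<in> States1 Th X" and p1: "pure Th X \<psi>"
    and s2: "\<phi> \<in> States1 Th Y" and p2: "pure Th Y \<phi>"
  shows "pure Th (cm X Y) (pa \<psi> \<phi>)"
proof -
  have psT: "\<psi> \<in> Tr uI X" and phT: "\<phi> \<in> Tr uI Y"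
    and eps: "sc (ee X) \<psi> = ii uI" and eph: "sc (ee Y) \<phi> = ii uI"
    using s1 s2 by (auto simp: States1_def States_def)
  have "atomic Th uI (cm X Y) (pa \<psi> \<phi>)"
    unfolding atomic_def
  proof (intro allI impI)
    fix D assume D: "refines Th uI (cm X Y) D (pa \<psi> \<phi>)"
    have "refines Th uI Y (sc (pa (ee X) (ii Y)) D) \<phi>"
      using refine_channel[OF D par_single[OF eff_test identity_test]]
        prod_apply[OF psT phT eff_tr id_tr] eps phT by simp
    then obtain \<nu> where nu: "0 \<le> \<nu>" "\<nu> \<le> 1" "sc (pa (ee X) (ii Y)) D = \<nu> *\<^sub>R \<phi>"
      using pureD[OF p2] by blast
    have "\<exists>\<mu>. sc (pa (ii X) b) D = \<mu> *\<^sub>R \<psi>" if b: "b \<in> Tr Y uI" for b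
      using refine_partial_eff[OF D b] prod_apply[OF psT phT id_tr eff_tr] eph psT pureD[OF p1]
      by fastforce
    then have "D = \<nu> *\<^sub>R pa \<psi> \<phi>"
      using product_from_partials[OF psT eps phT refines_state[OF D] nu(1,2) _ nu(3)] by blast
    then show "\<exists>c. 0 \<le> c \<and> c \<le> 1 \<and> D = c *\<^sub>R pa \<psi> \<phi>" using nu by blast
  qed
  then show ?thesis using prod_tr[OF psT phT] by (simp add: pure_def States_def)
qed

lemma sw_test: "[sw A B] \<in> Ts (cm A B) (cm B A)"
  by (rule channel_test[OF sw_tr sw_channel])

lemma swap_unit: "sw uI uI = ii uI"
  using sw_channel[of uI uI] single_tr[OF sw_test[of uI uI]] sq_idl by (simp add: eff_unit)

lemma swap_state_unit: "\<rho> \<in> Tr uI X \<Longrightarrow> sc (sw uI X) \<rho> = \<rho>"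
  using swap_natural[of "ii uI" uI uI \<rho> uI X] id_tr[of uI] by (simp add: swap_unit)

lemma marg_swap:
  assumes G: "\<Gamma> \<in> Tr uI (cm X Y)"
  shows "sc (pa (ii Y) (ee X)) (sc (sw X Y) \<Gamma>) = sc (pa (ee X) (ii Y)) \<Gamma>"
proof -
  have "sc (pa (ii Y) (ee X)) (sc (sw X Y) \<Gamma>) = sc (sc (pa (ii Y) (ee X)) (sw X Y)) \<Gamma>"
    using seq_assoc[OF G sw_tr par_closed[OF id_tr eff_tr]] by simp
  also have "\<dots> = sc (sc (sw uI Y) (pa (ee X) (ii Y))) \<Gamma>"
    using swap_natural[OF eff_tr[of X] id_tr[of Y]] by simp
  also have "\<dots> = sc (sw uI Y) (sc (pa (ee X) (ii Y)) \<Gamma>)"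
    using seq_assoc[OF G par_closed[OF eff_tr id_tr] sw_tr[of uI Y], simplified] by simp
  also have "\<dots> = sc (pa (ee X) (ii Y)) \<Gamma>"
    using swap_state_unit seq_closed[OF G par_closed[OF eff_tr id_tr]] by simp
  finally show ?thesis .
qed

lemma swap_twice: "\<Gamma> \<in> Tr uI (cm X Y) \<Longrightarrow> sc (sw Y X) (sc (sw X Y) \<Gamma>) = \<Gamma>"
  using seq_assoc[OF _ sw_tr sw_tr] swap_inv sq_idl by (metis idt_cmp)

lemma marg_split:
  assumes P: "\<Phi> \<in> Tr uI (cm P (cm Q R))"
  shows "sc (pa (ii P) (ee (cm Q R))) \<Phi> = sc (pa (ii P) (ee Q)) (sc (pa (ii (cm P Q)) (ee R)) \<Phi>)"
proof -
  have g: "pa (ii P) (ee Q) \<in> Tr (cm P Q) P" using par_closed[OF id_tr eff_tr, of P Q] by simp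
  have "sc (pa (ii P) (ee Q)) (sc (pa (ii (cm P Q)) (ee R)) \<Phi>)
      = sc (pa (pa (ii P) (ee Q)) (ee R)) \<Phi>"
    using scpa_comp[OF id_tr g eff_tr[of R] id_tr[of uI], of \<Phi> uI] P g pr_unitR[OF g] by simp
  also have "\<dots> = sc (pa (ii P) (ee (cm Q R))) \<Phi>"
    by (simp add: eff_cmp par_assoc[OF id_tr eff_tr eff_tr])
  finally show ?thesis by simp
qed

lemma marg_prod:
  assumes S: "\<Psi> \<in> Tr uI (cm P Q)" and F: "\<Phi> \<in> States1 Th R"
  shows "sc (pa (ii P) (ee (cm Q R))) (pa \<Psi> \<Phi>) = sc (pa (ii P) (ee Q)) \<Psi>"
proof -
  have FT: "\<Phi> \<in> Tr uI R" and e: "sc (ee R) \<Phi> = ii uI"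
    using F by (auto simp: States1_def States_def)
  have "pa (ii P) (ee (cm Q R)) = pa (pa (ii P) (ee Q)) (ee R)"
    by (simp add: eff_cmp par_assoc[OF id_tr eff_tr eff_tr])
  then show ?thesis
    using prod_apply[OF S FT par_closed[OF id_tr eff_tr] eff_tr] e seq_closed[OF S par_closed[OF id_tr eff_tr]]
    by simp
qed

lemma discard_prod:
  assumes S: "\<Phi> \<in> Tr uI P" and F: "\<Psi> \<in> States1 Th R"
  shows "sc (pa (ii P) (ee R)) (pa \<Phi> \<Psi>) = \<Phi>"
  using prod_apply[OF S _ id_tr eff_tr] F S by (simp add: States1_def States_def)

lemma marg_channel:
  assumes V: "[V] \<in> Ts Q' Q" and F: "\<Phi> \<in> Tr uI (cm P Q')"
  shows "sc (pa (ii P) (ee Q)) (sc (pa (ii P) V) \<Phi>) = sc (pa (ii P) (ee Q')) \<Phi>"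
  using scpa_comp[OF id_tr id_tr single_tr[OF V] eff_tr F] test_channel[OF V] by simp

lemma prod_as_apply:
  assumes S: "\<Psi> \<in> Tr uI (cm P A)" and F: "\<Phi> \<in> Tr uI R"
  shows "pa \<Psi> \<Phi> = sc (pa (ii P) (pa (ii A) \<Phi>)) \<Psi>"
  using interchange[OF S id_tr id_tr F] S F by (simp add: idc_assoc[OF F])

lemma reorder:
  fixes R S T :: 's
  defines "W \<equiv> sc (pa (sw S T) (ii R)) (sw R (cm S T))"
    and "Wi \<equiv> sc (sw (cm S T) R) (pa (sw T S) (ii R))"
  shows "[W] \<in> Ts (cm R (cm S T)) (cm T (cm S R))"
    and "[Wi] \<in> Ts (cm T (cm S R)) (cm R (cm S T))"
    and "sc Wi W = ii (cm R (cm S T))"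
    and "sc W Wi = ii (cm T (cm S R))"
proof -
  have s1: "[sw R (cm S T)] \<in> Ts (cm R (cm S T)) (cm S (cm T R))"
    using sw_test[of R "cm S T"] by simp
  have p1: "[pa (sw S T) (ii R)] \<in> Ts (cm S (cm T R)) (cm T (cm S R))"
    using par_single[OF sw_test[of S T] identity_test[of R]] by simp
  have s2: "[sw (cm S T) R] \<in> Ts (cm S (cm T R)) (cm R (cm S T))"
    using sw_test[of "cm S T" R] by simp
  have p2: "[pa (sw T S) (ii R)] \<in> Ts (cm T (cm S R)) (cm S (cm T R))"
    using par_single[OF sw_test[of T S] identity_test[of R]] by simp
  show "[W] \<in> Ts (cm R (cm S T)) (cm T (cm S R))" unfolding W_def by (rule sq_single[OF s1 p1])
  show "[Wi] \<in> Ts (cm T (cm S R)) (cm R (cm S T))" unfolding Wi_def by (rule sq_single[OF p2 s2])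
  note s1t = single_tr[OF s1] and p1t = single_tr[OF p1]
    and s2t = single_tr[OF s2] and p2t = single_tr[OF p2]
  have e1: "sc (pa (sw T S) (ii R)) (pa (sw S T) (ii R)) = ii (cm S (cm T R))"
    using interchange[OF sw_tr[of S T] sw_tr[of T S] id_tr[of R] id_tr[of R]] swap_inv[of T S]
    by (simp add: idt_cmp[symmetric])
  have e2: "sc (pa (sw S T) (ii R)) (pa (sw T S) (ii R)) = ii (cm T (cm S R))"
    using interchange[OF sw_tr[of T S] sw_tr[of S T] id_tr[of R] id_tr[of R]] swap_inv[of S T]
    by (simp add: idt_cmp[symmetric])
  have "sc Wi W = sc (sw (cm S T) R) (sc (sc (pa (sw T S) (ii R)) (pa (sw S T) (ii R))) (sw R (cm S T)))"
    unfolding W_def Wi_def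
    using seq_assoc[OF seq_closed[OF s1t p1t] p2t s2t] seq_assoc[OF s1t p1t p2t] by simp
  also have "\<dots> = ii (cm R (cm S T))" using e1 s1t swap_inv[of "cm S T" R] by simp
  finally show "sc Wi W = ii (cm R (cm S T))" .
  have "sc W Wi = sc (pa (sw S T) (ii R)) (sc (sc (sw R (cm S T)) (sw (cm S T) R)) (pa (sw T S) (ii R)))"
    unfolding W_def Wi_def
    using seq_assoc[OF seq_closed[OF p2t s2t] s1t p1t] seq_assoc[OF p2t s2t s1t] by simp
  also have "\<dots> = ii (cm T (cm S R))" using e2 p2t swap_inv[of R "cm S T"] by simp
  finally show "sc W Wi = ii (cm T (cm S R))" .
qed

text \<open>Such families serve as classical flags.\<close>
definition dist_family :: "nat \<Rightarrow> 's \<Rightarrow> (nat \<Rightarrow> 't) \<Rightarrow> 't list \<Rightarrow> bool" where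
  "dist_family n F \<alpha> ds \<longleftrightarrow> ds \<in> Ts F uI \<and> length ds = n \<and> (\<forall>i<n. \<alpha> i \<in> States1 Th F) \<and>
     (\<forall>i<n. \<forall>j<n. sc (ds ! j) (\<alpha> i) = (if i = j then ii uI else 0))"

lemma eff_left_par: "d \<in> Tr F uI \<Longrightarrow> a \<in> Tr B uI \<Longrightarrow> sc d (pa (ii F) a) = pa d a"
  using interchange[OF id_tr[of F] _ _ id_tr[of uI]] by simp

lemma extend_observation:
  assumes ds: "ds \<in> Ts F uI" and a: "[a0, a1] \<in> Ts A0 uI"
  shows "map (\<lambda>d. pa d a0) ds @ [pa (ee F) a1] \<in> Ts (cm F A0) uI"
proof -
  define t where "t = [pa (ii F) a0, pa (ii F) a1]"
  have t: "t \<in> Ts (cm F A0) F" using par_l[OF identity_test[of F] a] by (simp add: t_def)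
  define u where "u i = (if i = 0 then ds else [ee F])" for i :: nat
  have "concat (map (\<lambda>i. map (\<lambda>g. sc g (t ! i)) (u i)) [0..<length t]) \<in> Ts (cm F A0) uI"
    by (rule conditioned_test[OF t]) (use ds eff_test in \<open>auto simp: u_def\<close>)
  moreover have "a0 \<in> Tr A0 uI" "a1 \<in> Tr A0 uI" using test_mem[OF a] by auto
  ultimately show ?thesis
    using test_mem[OF ds] eff_left_par eff_tr by (simp add: t_def u_def upt_rec cong: map_cong)
qed

text \<open>A distinguishable family of size \<open>m\<close> and a distinguishable pair yield one of size
  \<open>m + 1\<close>: the old states tensored with \<open>\<rho>0\<close>, plus one new state tensored with \<open>\<rho>1\<close>.\<close>
lemma dist_family_extend:
  assumes d: "dist_family m F \<alpha> ds" and m: "0 < m"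
  shows "\<exists>F' \<alpha>' ds'. dist_family (Suc m) F' \<alpha>' ds'"
proof -
  obtain A0 \<rho>0 \<rho>1 a0 a1 where p: "\<rho>0 \<in> States1 Th A0" "\<rho>1 \<in> States1 Th A0"
    "[a0, a1] \<in> Ts A0 uI" "sc a0 \<rho>0 = ii uI" "sc a1 \<rho>1 = ii uI" "sc a0 \<rho>1 = 0" "sc a1 \<rho>0 = 0"
    using distinguishable_pair by blast
  have aT: "a0 \<in> Tr A0 uI" "a1 \<in> Tr A0 uI" using test_mem[OF p(3)] by auto
  have rT: "\<rho>0 \<in> Tr uI A0" "\<rho>1 \<in> Tr uI A0" using p(1,2) by (auto simp: States1_def States_def)
  have ds: "ds \<in> Ts F uI" "length ds = m" and al: "\<And>i. i < m \<Longrightarrow> \<alpha> i \<in> States1 Th F"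
    and dd: "\<And>i j. i < m \<Longrightarrow> j < m \<Longrightarrow> sc (ds ! j) (\<alpha> i) = (if i = j then ii uI else 0)"
    using d unfolding dist_family_def by auto
  have alT: "\<And>i. i < m \<Longrightarrow> \<alpha> i \<in> Tr uI F" using al by (auto simp: States1_def States_def)
  have eal: "\<And>i. i < m \<Longrightarrow> sc (ee F) (\<alpha> i) = ii uI" using al by (auto simp: States1_def)
  have dT: "\<And>j. j < m \<Longrightarrow> ds ! j \<in> Tr F uI" using test_nth[OF ds(1)] ds(2) by auto
  define ds' where "ds' = map (\<lambda>d. pa d a0) ds @ [pa (ee F) a1]"
  define \<alpha>' where "\<alpha>' i = (if i < m then pa (\<alpha> i) \<rho>0 else pa (\<alpha> 0) \<rho>1)" for i
  have nth': "ds' ! j = (if j < m then pa (ds ! j) a0 else pa (ee F) a1)" if "j < Suc m" for j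
    using ds that by (simp add: ds'_def nth_append)
  have pe: "sc (pa g h) (pa (\<alpha> i) x) = pa (sc g (\<alpha> i)) (sc h x)"
    if "i < m" "x \<in> Tr uI A0" "g \<in> Tr F uI" "h \<in> Tr A0 uI" for i x g h
    using prod_apply[OF alT[OF that(1)] that(2-4)] .
  have "sc (ds' ! j) (\<alpha>' i) = (if i = j then ii uI else 0)" if i: "i < Suc m" and j: "j < Suc m"
    for i j
  proof -
    have "sc (ds' ! j) (\<alpha>' i) = pa (sc (if j < m then ds ! j else ee F) (\<alpha> (if i < m then i else 0)))
                                   (sc (if j < m then a0 else a1) (if i < m then \<rho>0 else \<rho>1))"
      by (cases "i < m"; cases "j < m")
        (simp_all add: \<alpha>'_def nth'[OF j] pe dT aT rT m eff_tr)
    then show ?thesis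
      using dd[of i j] dd[of 0 j] eal m p(4-7) i j pr_unitR[OF id_tr[of uI]]
      by (cases "i < m"; cases "j < m") auto
  qed
  moreover have "\<alpha>' i \<in> States1 Th (cm F A0)" if "i < Suc m" for i
    using prod_states1[OF al p(1)] prod_states1[OF al[OF m] p(2)] that by (auto simp: \<alpha>'_def)
  moreover have "ds' \<in> Ts (cm F A0) uI" "length ds' = Suc m"
    using extend_observation[OF ds(1) p(3)] ds(2) by (simp_all add: ds'_def)
  ultimately have "dist_family (Suc m) (cm F A0) \<alpha>' ds'"
    unfolding dist_family_def by blast
  then show ?thesis by blast
qed

lemma dist_family_exists: "\<exists>F \<alpha> ds. dist_family (Suc n) F \<alpha> ds"
proof (induction n)
  case 0
  have "dist_family 1 uI (\<lambda>_. ii uI) [ii uI]"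
    unfolding dist_family_def using identity_test[of uI] id_tr[of uI]
    by (auto simp: States1_def States_def eff_unit)
  then show ?case by auto
next
  case (Suc n)
  then show ?case using dist_family_extend by blast
qed

definition marg :: "'s \<Rightarrow> 's \<Rightarrow> 't \<Rightarrow> 't" where
  "marg B R S = sc (pa (ee B) (ii R)) S"

definition flag :: "'s \<Rightarrow> 's \<Rightarrow> 't \<Rightarrow> 't" where
  "flag B R \<alpha> = pa (ii B) (pa \<alpha> (ii R))"

lemma flag_test: "\<alpha> \<in> States1 Th F \<Longrightarrow> [flag B R \<alpha>] \<in> Ts (cm B R) (cm B (cm F R))"
  unfolding flag_def
  using par_single[OF identity_test[of B] par_single[OF states1_test identity_test[of R]]] by simp

lemma marg_test: "[pa (ee B) (ii R)] \<in> Ts (cm B R) R"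
  using par_single[OF eff_test[of B] identity_test[of R]] by simp

lemma eff_marg: "S \<in> Tr uI (cm B R) \<Longrightarrow> sc (ee R) (marg B R S) = sc (ee (cm B R)) S"
  unfolding marg_def using scpa_comp[OF eff_tr[of B] id_tr[of uI] id_tr[of R] eff_tr[of R], of S uI]
  by (simp add: eff_cmp)

lemma marg_flag:
  assumes a: "\<alpha> \<in> States1 Th F" and G: "G \<in> Tr uI (cm B R)"
  shows "marg (cm B F) R (sc (flag B R \<alpha>) G) = marg B R G"
proof -
  have aT: "\<alpha> \<in> Tr uI F" and ea: "sc (ee F) \<alpha> = ii uI" using a by (auto simp: States1_def States_def)
  have "sc (pa (ee F) (ii R)) (pa \<alpha> (ii R)) = ii R"
    using interchange[OF aT eff_tr id_tr[of R] id_tr[of R]] ea by simp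
  moreover have "sc (pa (ee B) (pa (ee F) (ii R))) (sc (flag B R \<alpha>) G)
      = sc (pa (sc (ee B) (ii B)) (sc (pa (ee F) (ii R)) (pa \<alpha> (ii R)))) G"
    unfolding flag_def
    using scpa_comp[OF id_tr eff_tr par_closed[OF aT id_tr[of R], simplified]
        par_closed[OF eff_tr[of F] id_tr[of R], simplified] G]
    by simp
  ultimately show ?thesis
    unfolding marg_def by (simp add: eff_cmp par_assoc[OF eff_tr eff_tr id_tr])
qed

lemma flag_readout:
  assumes d: "d \<in> Tr F uI" and a: "\<alpha> \<in> Tr uI F" and G: "G \<in> Tr uI (cm B R)"
    and c: "sc d \<alpha> = c *\<^sub>R ii uI"
  shows "sc (pa (pa (ii B) d) (ii R)) (sc (flag B R \<alpha>) G) = c *\<^sub>R G"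
proof -
  have "sc (pa (ii B) (pa d (ii R))) (sc (flag B R \<alpha>) G)
      = sc (pa (sc (ii B) (ii B)) (sc (pa d (ii R)) (pa \<alpha> (ii R)))) G"
    unfolding flag_def
    using scpa_comp[OF id_tr id_tr par_closed[OF a id_tr[of R], simplified]
        par_closed[OF d id_tr[of R], simplified] G]
    by simp
  also have "sc (pa d (ii R)) (pa \<alpha> (ii R)) = c *\<^sub>R ii R"
    using interchange[OF a d id_tr[of R] id_tr[of R]] c by simp
  finally show ?thesis using G by (simp add: par_assoc[OF id_tr d id_tr] idt_cmp[symmetric])
qed

lemma conditioned_state:
  assumes s: "s \<in> Ts uI X" and y: "\<And>i. i < length s \<Longrightarrow> [y i] \<in> Ts X Z"
  shows "[\<Sum>i<length s. sc (y i) (s ! i)] \<in> Ts uI Z"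
  using coarse_all[OF cond_idx[OF s y]]
  by (simp add: interv_sum_list_conv_sum_set_nat atLeast0LessThan)

lemma replace_outcome:
  assumes Rs: "Rs \<in> Ts uI X" and c: "c < length Rs" and q: "sc (ee X) (Rs ! c) = q *\<^sub>R ii uI"
    and D: "[D] \<in> Ts uI Z" and g: "[g] \<in> Ts X Z"
  shows "[q *\<^sub>R D + sc g (\<Sum>i\<in>{..<length Rs} - {c}. Rs ! i)] \<in> Ts uI Z"
proof -
  define y where "y i = (if i = c then sc D (ee X) else g)" for i
  have "[y i] \<in> Ts X Z" for i using sq_single[OF eff_test D] g by (simp add: y_def eff_unit)
  then have "[\<Sum>i<length Rs. sc (y i) (Rs ! i)] \<in> Ts uI Z" using conditioned_state[OF Rs] by blast
  moreover have "sc (y c) (Rs ! c) = q *\<^sub>R D"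
    using seq_assoc[OF test_nth[OF Rs c] eff_tr single_tr[OF D]] q single_tr[OF D]
    by (simp add: y_def)
  ultimately show ?thesis
    using sum.remove[of "{..<length Rs}" c "\<lambda>i. sc (y i) (Rs ! i)"] c by (simp add: y_def sc_sumr)
qed

lemma normalized_flagged_split:
  assumes T: "T \<in> Ts uI (cm B R)" "Y0 \<subseteq> {..<length T}" and j0: "j0 \<in> Y0"
    and al: "\<alpha>0 \<in> States1 Th F" "\<alpha>1 \<in> States1 Th F"
    and q: "sc (ee (cm B R)) (\<Sum>j\<in>Y0. T ! j) = q *\<^sub>R ii uI" "q > 0"
  shows "[(1/q) *\<^sub>R (sc (flag B R \<alpha>0) (T ! j0) + sc (flag B R \<alpha>1) (\<Sum>j\<in>Y0 - {j0}. T ! j))]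
    \<in> Ts uI (cm B (cm F R))"
proof -
  have finY: "finite Y0" using T(2) finite_subset by blast
  define a where "a j = (if j = j0 then \<alpha>0 else \<alpha>1)" for j
  have a: "[flag B R (a j)] \<in> Ts (cm B R) (cm B (cm F R))" for j
    using flag_test al by (simp add: a_def)
  define L where "L = map (\<lambda>j. sc (flag B R (a j)) (T ! j)) [0..<length T]"
  have L: "L \<in> Ts uI (cm B (cm F R))" unfolding L_def by (rule cond_idx[OF T(1) a])
  define \<Delta> where "\<Delta> = (\<Sum>j\<in>Y0. L ! j)"
  have "\<Delta> = sc (flag B R \<alpha>0) (T ! j0) + (\<Sum>j\<in>Y0 - {j0}. sc (flag B R (a j)) (T ! j))"
    unfolding \<Delta>_def using sum.remove[OF finY j0, of "\<lambda>j. L ! j"] T(2) j0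
    by (simp add: L_def a_def subset_iff)
  also have "(\<Sum>j\<in>Y0 - {j0}. sc (flag B R (a j)) (T ! j)) = sc (flag B R \<alpha>1) (\<Sum>j\<in>Y0 - {j0}. T ! j)"
    unfolding sc_sumr by (rule sum.cong) (auto simp: a_def)
  finally have \<Delta>_eq: "\<Delta> = sc (flag B R \<alpha>0) (T ! j0) + sc (flag B R \<alpha>1) (\<Sum>j\<in>Y0 - {j0}. T ! j)" .
  have "sc (ee (cm B (cm F R))) \<Delta> = sc (ee (cm B R)) (\<Sum>j\<in>Y0. T ! j)"
    unfolding \<Delta>_def sc_sumr using T(2) channel_eff[OF a test_nth[OF T(1)]]
    by (intro sum.cong) (auto simp: L_def)
  then show ?thesis
    using normalize[of \<Delta>] sub_sum_tr[OF L, of Y0] T(2) q \<Delta>_eq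
    by (simp add: \<Delta>_def L_def States_def)
qed

lemma outside_normalized_zero:
  assumes s: "s \<in> Ts uI X" and Y: "Y0 \<subseteq> {..<length s}"
    and w: "sc (ee X) (\<Sum>j\<in>Y0. s ! j) = ii uI" and j: "j < length s" "j \<notin> Y0"
  shows "s ! j = 0"
proof -
  have "(\<Sum>j<length s. sc (ee X) (s ! j)) = ii uI"
    using test_eff_sum[OF s] by (simp add: sum_map_nth eff_unit)
  moreover have "(\<Sum>j<length s. sc (ee X) (s ! j))
      = (\<Sum>j\<in>{..<length s} - Y0. sc (ee X) (s ! j)) + (\<Sum>j\<in>Y0. sc (ee X) (s ! j))"
    using sum.subset_diff[OF Y] by simp
  ultimately have z: "(\<Sum>j\<in>{..<length s} - Y0. sc (ee X) (s ! j)) = 0"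
    using w by (simp add: sc_sumr)
  have "sc (ee X) (s ! j) = 0"
    by (rule nonneg_sum0[OF _ _ z]) (use j in \<open>auto intro: seq_closed[OF test_nth[OF s] eff_tr]\<close>)
  then show ?thesis using state_zero test_nth[OF s j(1)] by (simp add: States_def)
qed

lemma marg_prepare:
  assumes b: "\<beta> \<in> States1 Th B" and x: "x \<in> Tr uI R"
  shows "marg B R (sc (pa \<beta> (ii R)) x) = x"
proof -
  have bT: "\<beta> \<in> Tr uI B" and eb: "sc (ee B) \<beta> = ii uI"
    using b by (auto simp: States1_def States_def)
  show ?thesis
    unfolding marg_def using scpa_comp[OF bT eff_tr id_tr id_tr, of x uI] x eb by simp
qed

lemma embed_in_test:
  assumes s: "s \<in> Ts uI R" and m0: "m0 < length s" and S': "[S'] \<in> Ts uI (cm B R)"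
    and e: "sc (ee R) (s ! m0) = p *\<^sub>R ii uI"
  defines "\<beta> \<equiv> sc (pa (ii B) (ee R)) S'"
  shows "map (\<lambda>i. if i = m0 then p *\<^sub>R S' else sc (pa \<beta> (ii R)) (s ! i)) [0..<length s]
    \<in> Ts uI (cm B R)"
proof -
  have "[\<beta>] \<in> Ts uI B"
    unfolding \<beta>_def using sq_single[OF S' par_single[OF identity_test[of B] eff_test[of R]]] by simp
  define y where "y i = (if i = m0 then sc S' (ee R) else pa \<beta> (ii R))" for i
  have "[y i] \<in> Ts R (cm B R)" for i
    using sq_single[OF eff_test[of R] S'] par_single[OF \<open>[\<beta>] \<in> Ts uI B\<close> identity_test[of R]]
    by (simp add: y_def eff_unit)
  then have "map (\<lambda>i. sc (y i) (s ! i)) [0..<length s] \<in> Ts uI (cm B R)"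
    using cond_idx[OF s] by blast
  moreover have "sc (y m0) (s ! m0) = p *\<^sub>R S'"
    using seq_assoc[OF test_nth[OF s m0] eff_tr single_tr[OF S']] e single_tr[OF S']
    by (simp add: y_def)
  then have "map (\<lambda>i. sc (y i) (s ! i)) [0..<length s]
      = map (\<lambda>i. if i = m0 then p *\<^sub>R S' else sc (pa \<beta> (ii R)) (s ! i)) [0..<length s]"
    by (intro map_cong) (auto simp: y_def)
  ultimately show ?thesis by simp
qed

lemma refinement_zero_weight:
  assumes T: "T \<in> Ts uI X" "Y0 \<subseteq> {..<length T}" and e: "sc (ee X) (\<Sum>j\<in>Y0. T ! j) = 0"
    and j0: "j0 \<in> Y0"
  shows "T ! j0 = 0"
proof -
  have Z: "(\<Sum>j\<in>Y0. sc (ee X) (T ! j)) = 0" using e by (simp add: sc_sumr)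
  have "sc (ee X) (T ! j0) = 0"
  proof (rule nonneg_sum0[OF _ _ Z j0])
    show "finite Y0" using T(2) finite_subset by blast
    show "sc (ee X) (T ! j) \<in> Tr uI uI" if "j \<in> Y0" for j
      using that T(2) seq_closed[OF test_nth[OF T(1)] eff_tr] by auto
  qed
  then show ?thesis using state_zero test_nth[OF T(1)] j0 T(2) by (auto simp: States_def)
qed

end

locale purified_opt = causal_opt Th for Th :: "('s, 't::real_normed_vector) opt" +
  assumes purification: "purification_postulate Th"
begin

lemma purify:
  "\<rho> \<in> States1 Th Y \<Longrightarrow> \<exists>D \<Phi>. pure Th (cm Y D) \<Phi> \<and> \<Phi> \<in> States1 Th (cm Y D) \<and>
    sc (pa (ii Y) (ee D)) \<Phi> = \<rho>"
  using purification unfolding purification_postulate_def marginal_def by blast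

lemma purification_unique:
  assumes "\<Phi> \<in> States1 Th (cm Y Z)" "\<Phi>' \<in> States1 Th (cm Y Z)"
    "pure Th (cm Y Z) \<Phi>" "pure Th (cm Y Z) \<Phi>'"
    "sc (pa (ii Y) (ee Z)) \<Phi> = sc (pa (ii Y) (ee Z)) \<Phi>'"
  shows "\<exists>U. [U] \<in> Ts Z Z \<and> \<Phi>' = sc (pa (ii Y) U) \<Phi>"
proof -
  obtain U where U: "U \<in> RevGroup Th Z" "\<Phi>' = sc (pa (ii Y) U) \<Phi>"
    using purification assms unfolding purification_postulate_def marginal_def by blast
  then have "[U] \<in> Ts Z Z"
    by (intro channel_test) (auto simp: RevGroup_def reversible_def channel_def)
  then show ?thesis using U by blast
qed

lemma pure_swap:
  assumes "\<Psi> \<in> States1 Th (cm A B)" "pure Th (cm A B) \<Psi>"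
  shows "sc (sw A B) \<Psi> \<in> States1 Th (cm B A)" "pure Th (cm B A) (sc (sw A B) \<Psi>)"
  using channel_state[OF assms(1) sw_test]
    pure_reversible[of uI "cm A B" \<Psi> "sw A B" "cm B A" "sw B A"] assms(2) sw_tr[of A B]
    sw_test[of B A] swap_inv[of B A] swap_inv[of A B] pr_unitL[OF sw_tr[of A B]]
  by simp_all

text \<open>Two pure normalized states \<open>\<Psi>\<close> of \<open>\<tilde>A A\<close> and \<open>\<Phi>\<close> of \<open>\<tilde>A Y\<close> with the same marginal on
  \<open>\<tilde>A\<close>: the products \<open>\<Psi> \<otimes> \<Phi>\<close> and (reordered) \<open>\<Phi> \<otimes> \<Psi>\<close> are purifications of this
  marginal on the same system, hence differ by a reversible channel.\<close>
lemma swapped_products_related: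
  assumes Ps1: "\<Psi> \<in> States1 Th (cm At A)" and Psp: "pure Th (cm At A) \<Psi>"
    and P1: "\<Phi> \<in> States1 Th (cm At Y)" and Pp: "pure Th (cm At Y) \<Phi>"
    and mP: "sc (pa (ii At) (ee Y)) \<Phi> = sc (pa (ii At) (ee A)) \<Psi>"
  defines "W \<equiv> sc (pa (sw At A) (ii Y)) (sw Y (cm At A))"
  shows "\<exists>U. [U] \<in> Ts (cm A (cm At Y)) (cm A (cm At Y)) \<and>
    sc (pa (ii At) W) (pa \<Phi> \<Psi>) = sc (pa (ii At) U) (pa \<Psi> \<Phi>)"
proof -
  have PsT: "\<Psi> \<in> Tr uI (cm At A)" and PT: "\<Phi> \<in> Tr uI (cm At Y)"
    using Ps1 P1 by (simp_all add: States1_def States_def)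
  have P1s: "pa \<Psi> \<Phi> \<in> States1 Th (cm At (cm A (cm At Y)))" "pure Th (cm At (cm A (cm At Y))) (pa \<Psi> \<Phi>)"
    using prod_states1[OF Ps1 P1] pure_prod[OF Ps1 Psp P1 Pp] by simp_all
  have mP1: "sc (pa (ii At) (ee (cm A (cm At Y)))) (pa \<Psi> \<Phi>) = sc (pa (ii At) (ee A)) \<Psi>"
    using marg_prod[OF PsT P1] by simp
  note R = reorder[where R = Y and S = At and T = A, folded W_def]
  have Wt: "[W] \<in> Ts (cm Y (cm At A)) (cm A (cm At Y))" using R(1) by simp
  have P2s: "pa \<Phi> \<Psi> \<in> States1 Th (cm At (cm Y (cm At A)))"
    "pure Th (cm At (cm Y (cm At A))) (pa \<Phi> \<Psi>)"
    using prod_states1[OF P1 Ps1] pure_prod[OF P1 Pp Ps1 Psp] by simp_all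
  have "sc (pa (ii At) W) (pa \<Phi> \<Psi>) \<in> States1 Th (cm At (cm A (cm At Y)))"
    "pure Th (cm At (cm A (cm At Y))) (sc (pa (ii At) W) (pa \<Phi> \<Psi>))"
    using channel_state[OF P2s(1) par_single[OF identity_test Wt]]
      pure_reversible[OF P2s(2) single_tr[OF Wt] R(2-4)] by simp_all
  moreover have "sc (pa (ii At) (ee (cm A (cm At Y)))) (sc (pa (ii At) W) (pa \<Phi> \<Psi>)) = sc (pa (ii At) (ee A)) \<Psi>"
    using marg_channel[OF Wt prod_tr[OF PT PsT, simplified]] marg_prod[OF PT Ps1] mP by simp
  ultimately show ?thesis
    using purification_unique[OF P1s(1) _ P1s(2)] mP1 by simp
qed

text \<open>Then \<open>\<Gamma>\<close> is obtained from \<open>\<Psi>\<close>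
  by a channel \<open>A \<rightarrow> X\<close>: purify \<open>\<Gamma>\<close> to \<open>\<Phi>\<close> on \<open>\<tilde>A X D\<close> and relate \<open>\<Psi> \<otimes> \<Phi>\<close> and
  \<open>\<Phi> \<otimes> \<Psi>\<close> by a channel \<open>U\<close>; then appending \<open>\<Phi>\<close>, applying \<open>U\<close>, undoing the reordering
  and discarding everything except \<open>X\<close> is the required channel.\<close>
lemma steering_left:
  assumes Ps1: "\<Psi> \<in> States1 Th (cm At A)" and Psp: "pure Th (cm At A) \<Psi>"
    and G: "\<Gamma> \<in> States1 Th (cm At X)"
    and mG: "sc (pa (ii At) (ee X)) \<Gamma> = sc (pa (ii At) (ee A)) \<Psi>"
  shows "\<exists>V. [V] \<in> Ts A X \<and> \<Gamma> = sc (pa (ii At) V) \<Psi>"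
proof -
  have PsT: "\<Psi> \<in> Tr uI (cm At A)" using Ps1 by (simp add: States1_def States_def)
  obtain D \<Phi> where Pp: "pure Th (cm At (cm X D)) \<Phi>" and P1: "\<Phi> \<in> States1 Th (cm At (cm X D))"
    and mP0: "sc (pa (ii (cm At X)) (ee D)) \<Phi> = \<Gamma>"
    using purify[OF G] by auto
  have PT: "\<Phi> \<in> Tr uI (cm At (cm X D))" using P1 by (simp add: States1_def States_def)
  have "sc (pa (ii At) (ee (cm X D))) \<Phi> = sc (pa (ii At) (ee A)) \<Psi>"
    using marg_split[OF PT] mP0 mG by simp
  then obtain U where Ut: "[U] \<in> Ts (cm A (cm At (cm X D))) (cm A (cm At (cm X D)))"
    and UP: "sc (pa (ii At) (sc (pa (sw At A) (ii (cm X D))) (sw (cm X D) (cm At A)))) (pa \<Phi> \<Psi>)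
      = sc (pa (ii At) U) (pa \<Psi> \<Phi>)"
    using swapped_products_related[OF Ps1 Psp P1 Pp] by blast
  note R = reorder[where R = "cm X D" and S = At and T = A]
  define Wi where "Wi = sc (sw (cm At A) (cm X D)) (pa (sw A At) (ii (cm X D)))"
  define V1 where "V1 = pa (ii A) \<Phi>"
  define V4 where "V4 = pa (ii (cm X D)) (ee (cm At A))"
  define V5 where "V5 = pa (ii X) (ee D)"
  have Wt: "[sc (pa (sw At A) (ii (cm X D))) (sw (cm X D) (cm At A))]
      \<in> Ts (cm (cm X D) (cm At A)) (cm A (cm At (cm X D)))" using R(1) by simp
  have Wit: "[Wi] \<in> Ts (cm A (cm At (cm X D))) (cm (cm X D) (cm At A))" using R(2) by (simp add: Wi_def)
  have V1t: "[V1] \<in> Ts A (cm A (cm At (cm X D)))"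
    using par_single[OF identity_test[of A] states1_test[OF P1]] by (simp add: V1_def)
  have V4t: "[V4] \<in> Ts (cm (cm X D) (cm At A)) (cm X D)"
    using par_single[OF identity_test[of "cm X D"] eff_test[of "cm At A"]] by (simp add: V4_def)
  have V5t: "[V5] \<in> Ts (cm X D) X"
    using par_single[OF identity_test[of X] eff_test[of D]] by (simp add: V5_def)
  note t1 = single_tr[OF V1t] and tU = single_tr[OF Ut] and tWi = single_tr[OF Wit]
    and t4 = single_tr[OF V4t] and t5 = single_tr[OF V5t]
  have P2T: "pa \<Phi> \<Psi> \<in> Tr uI (cm At (cm (cm X D) (cm At A)))" using prod_tr[OF PT PsT] by simp
  have "pa \<Phi> \<Psi> = sc (pa (ii At) Wi) (sc (pa (ii At) U) (pa \<Psi> \<Phi>))"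
    using UP[symmetric] comp_id_left[OF single_tr[OF Wt] tWi P2T] R(3) P2T
    by (simp add: Wi_def idt_cmp[symmetric])
  also have "pa \<Psi> \<Phi> = sc (pa (ii At) V1) \<Psi>" unfolding V1_def by (rule prod_as_apply[OF PsT PT])
  finally have "pa \<Phi> \<Psi> = sc (pa (ii At) (sc Wi (sc U V1))) \<Psi>"
    using comp_id_left[OF t1 tU PsT] comp_id_left[OF seq_closed[OF t1 tU] tWi PsT] by simp
  moreover have "\<Phi> = sc (pa (ii At) V4) (pa \<Phi> \<Psi>)"
    using discard_prod[OF PT Ps1] idc_assoc[OF eff_tr[of "cm At A"], of At "cm X D"]
    by (simp add: V4_def)
  ultimately have "\<Phi> = sc (pa (ii At) (sc V4 (sc Wi (sc U V1)))) \<Psi>"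
    using comp_id_left[OF seq_closed[OF seq_closed[OF t1 tU] tWi] t4 PsT] by simp
  moreover have "\<Gamma> = sc (pa (ii At) V5) \<Phi>"
    using mP0 idc_assoc[OF eff_tr[of D], of At X] by (simp add: V5_def)
  ultimately have "\<Gamma> = sc (pa (ii At) (sc V5 (sc V4 (sc Wi (sc U V1))))) \<Psi>"
    using comp_id_left[OF seq_closed[OF seq_closed[OF seq_closed[OF t1 tU] tWi] t4] t5 PsT]
    by simp
  moreover have "[sc V5 (sc V4 (sc Wi (sc U V1)))] \<in> Ts A X"
    by (rule sq_single[OF sq_single[OF sq_single[OF sq_single[OF V1t Ut] Wit] V4t] V5t])
  ultimately show ?thesis by blast
qed

lemma steering:
  assumes Ps1: "\<Psi> \<in> States1 Th (cm A At)" and Psp: "pure Th (cm A At) \<Psi>"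
    and G: "\<Gamma> \<in> States1 Th (cm X At)"
    and mG: "sc (pa (ee X) (ii At)) \<Gamma> = sc (pa (ee A) (ii At)) \<Psi>"
  shows "\<exists>V. [V] \<in> Ts A X \<and> \<Gamma> = sc (pa V (ii At)) \<Psi>"
proof -
  have PsiT: "\<Psi> \<in> Tr uI (cm A At)" and GT: "\<Gamma> \<in> Tr uI (cm X At)"
    using Ps1 G by (simp_all add: States1_def States_def)
  obtain V where V: "[V] \<in> Ts A X"
    and GV: "sc (sw X At) \<Gamma> = sc (pa (ii At) V) (sc (sw A At) \<Psi>)"
    using steering_left[OF pure_swap[OF Ps1 Psp] channel_state[OF G sw_test]]
      marg_swap[OF PsiT] marg_swap[OF GT] mG by metis
  have VT: "V \<in> Tr A X" using single_tr[OF V] .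
  have "sc (sw At X) (sc (pa (ii At) V) (sc (sw A At) \<Psi>))
      = sc (sc (sw At X) (pa (ii At) V)) (sc (sw A At) \<Psi>)"
    using seq_assoc[OF seq_closed[OF PsiT sw_tr] par_closed[OF id_tr VT] sw_tr] by simp
  also have "\<dots> = sc (pa V (ii At)) (sc (sw At A) (sc (sw A At) \<Psi>))"
    using swap_natural[OF id_tr[of At] VT]
      seq_assoc[OF seq_closed[OF PsiT sw_tr] sw_tr par_closed[OF VT id_tr]] by simp
  finally have "\<Gamma> = sc (pa V (ii At)) \<Psi>"
    using GV swap_twice[OF GT] swap_twice[OF PsiT] by simp
  then show ?thesis using V by blast
qed

end

locale faithful_state = purified_opt Th for Th :: "('s, 't::real_normed_vector) opt" +
  fixes A At :: 's and \<Psi> :: 't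
  assumes Psi_state: "\<Psi> \<in> States1 Th (cmp Th A At)"
    and Psi_pure: "pure Th (cmp Th A At) \<Psi>"
    and Psi_faithful: "dyn_faithful Th A At \<Psi>"
begin

definition rep :: "'t \<Rightarrow> 't" where
  "rep C = sc (pa C (ii At)) \<Psi>"

abbreviation "\<omega> \<equiv> sc (pa (ee A) (ii At)) \<Psi>"

lemma Psi_tr: "\<Psi> \<in> Tr uI (cm A At)"
  using Psi_state by (simp add: States1_def States_def)

lemma rep_tr: "C \<in> Tr A B \<Longrightarrow> rep C \<in> Tr uI (cm B At)"
  unfolding rep_def using seq_closed[OF Psi_tr par_closed[OF _ id_tr[of At]]] by simp

lemma rep_sum: "rep (sum f K) = (\<Sum>k\<in>K. rep (f k))"
  unfolding rep_def by (simp add: pa_suml sc_suml)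

lemma rep_scale: "rep (c *\<^sub>R C) = c *\<^sub>R rep C"
  unfolding rep_def by simp

lemma rep_inj: "C \<in> Tr A B \<Longrightarrow> C' \<in> Tr A B \<Longrightarrow> rep C = rep C' \<Longrightarrow> C = C'"
  using Psi_faithful unfolding dyn_faithful_def rep_def by blast

lemma marg_rep: "C \<in> Tr A B \<Longrightarrow> marg B At (rep C) = sc (pa (sc (ee B) C) (ii At)) \<Psi>"
  unfolding marg_def rep_def using scpa_comp[OF _ eff_tr id_tr[of At] id_tr[of At] Psi_tr] by simp

lemma eff_omega: "sc (ee At) \<omega> = ii uI"
  using scpa_comp[OF eff_tr[of A] id_tr[of uI] id_tr[of At] eff_tr[of At] Psi_tr] Psi_state
  by (simp add: eff_cmp States1_def)

lemma map_rep_test: "t \<in> Ts A B \<Longrightarrow> map rep t \<in> Ts uI (cm B At)"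
  using cond_single[OF states1_test[OF Psi_state] par_r[OF _ identity_test[of At]]]
  by (simp add: rep_def[abs_def] comp_def)

lemma map_rep_marg:
  assumes t: "t \<in> Ts A B"
  shows "sum_list (map (marg B At) (map rep t)) = \<omega>"
proof -
  have "map (marg B At) (map rep t) = map (\<lambda>C. sc (pa (sc (ee B) C) (ii At)) \<Psi>) t"
    unfolding map_map comp_def by (rule map_cong[OF refl]) (use test_mem[OF t] marg_rep in blast)
  also have "sum_list \<dots> = sc (pa (sum_list (map (sc (ee B)) t)) (ii At)) \<Psi>"
    by (simp add: sc_sumlistl pa_sumlistl comp_def)
  finally show ?thesis using test_eff_sum[OF t] by simp
qed

text \<open>If the states \<open>G\<^sub>i\<close> of \<open>B \<tilde>A\<close> have marginals adding up
  to \<open>\<omega>\<close>, and attaching distinguishable flags to them gives a deterministic state \<open>\<Gamma>\<close>, then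
  they are the representatives of the outcomes of a test \<open>A \<rightarrow> B\<close>: by steering, \<open>\<Gamma>\<close> is
  \<open>(V \<otimes> I) \<Psi>\<close> for a channel \<open>V : A \<rightarrow> B F\<close>, and reading out the flag after \<open>V\<close> is the
  required test.\<close>
lemma realize_flagged:
  assumes df: "dist_family n F \<alpha> ds"
    and GT: "\<And>i. i < n \<Longrightarrow> Gs ! i \<in> Tr uI (cm B At)"
    and Gam: "[\<Sum>i<n. sc (flag B At (\<alpha> i)) (Gs ! i)] \<in> Ts uI (cm B (cm F At))"
    and M: "(\<Sum>i<n. marg B At (Gs ! i)) = \<omega>"
  shows "\<exists>cs\<in>Ts A B. length cs = n \<and> (\<forall>i<n. rep (cs ! i) = Gs ! i)"
proof -
  have ds: "ds \<in> Ts F uI" "length ds = n" and al: "\<And>i. i < n \<Longrightarrow> \<alpha> i \<in> States1 Th F"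
    and dd: "\<And>i j. i < n \<Longrightarrow> j < n \<Longrightarrow> sc (ds ! j) (\<alpha> i) = (if i = j then 1 else 0) *\<^sub>R ii uI"
    using df unfolding dist_family_def by auto
  define \<Gamma> where "\<Gamma> = (\<Sum>i<n. sc (flag B At (\<alpha> i)) (Gs ! i))"
  have "marg (cm B F) At \<Gamma> = (\<Sum>i<n. marg (cm B F) At (sc (flag B At (\<alpha> i)) (Gs ! i)))"
    by (simp add: \<Gamma>_def sc_sumr marg_def)
  also have "\<dots> = (\<Sum>i<n. marg B At (Gs ! i))"
    by (rule sum.cong[OF refl]) (simp add: marg_flag al GT)
  finally have m\<Gamma>: "sc (pa (ee (cm B F)) (ii At)) \<Gamma> = \<omega>" using M by (simp add: marg_def)
  have "\<Gamma> \<in> States1 Th (cm (cm B F) At)" using test_states1[OF Gam] by (simp add: \<Gamma>_def)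
  then obtain V where V: "[V] \<in> Ts A (cm B F)" and GV: "\<Gamma> = sc (pa V (ii At)) \<Psi>"
    using steering[OF Psi_state Psi_pure _ m\<Gamma>] by blast
  define cs where "cs = map (\<lambda>d. sc d V) (map (pa (ii B)) ds)"
  have "rep (cs ! j) = Gs ! j" if j: "j < n" for j
  proof -
    have dj: "ds ! j \<in> Tr F uI" using test_nth[OF ds(1)] j ds(2) by simp
    have "rep (cs ! j) = sc (pa (pa (ii B) (ds ! j)) (ii At)) \<Gamma>"
      using scpa_comp[OF single_tr[OF V] par_closed[OF id_tr[of B] dj, simplified]
          id_tr[of At] id_tr[of At] Psi_tr] GV j ds(2)
      by (simp add: cs_def rep_def)
    also have "\<dots> = (\<Sum>i<n. (if i = j then 1 else 0) *\<^sub>R Gs ! i)"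
      unfolding \<Gamma>_def sc_sumr using flag_readout[OF dj _ GT] dd[OF _ j] al
      by (intro sum.cong) (auto simp: States1_def States_def)
    also have "\<dots> = (\<Sum>i<n. if i = j then Gs ! i else 0)" by (rule sum.cong) auto
    also have "\<dots> = Gs ! j" using j by simp
    finally show ?thesis .
  qed
  moreover have "cs \<in> Ts A B"
    unfolding cs_def using cond_single[OF V par_l[OF identity_test[of B] ds(1)]] by simp
  moreover have "length cs = n" using ds(2) by (simp add: cs_def)
  ultimately show ?thesis by blast
qed

lemma test_realized:
  assumes Rs: "Rs \<in> Ts uI (cm B At)" and M: "sum_list (map (marg B At) Rs) = \<omega>"
  shows "\<exists>t\<in>Ts A B. map rep t = Rs"
proof -
  obtain n where n: "length Rs = Suc n" using test_nonempty[OF Rs] by (cases Rs) auto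
  obtain F \<alpha> ds where df: "dist_family (Suc n) F \<alpha> ds" using dist_family_exists by blast
  have "[\<Sum>i<Suc n. sc (flag B At (\<alpha> i)) (Rs ! i)] \<in> Ts uI (cm B (cm F At))"
    using conditioned_state[OF Rs, of "\<lambda>i. flag B At (\<alpha> i)"] flag_test df n
    by (simp add: dist_family_def)
  moreover have "(\<Sum>i<Suc n. marg B At (Rs ! i)) = \<omega>" using M n by (simp add: sum_map_nth)
  moreover have "\<And>i. i < Suc n \<Longrightarrow> Rs ! i \<in> Tr uI (cm B At)" using test_nth[OF Rs] n by simp
  ultimately obtain cs where "cs \<in> Ts A B" "length cs = Suc n" "\<forall>i<Suc n. rep (cs ! i) = Rs ! i"
    using realize_flagged[OF df] by blast
  moreover have "map rep cs = Rs" using calculation n by (intro nth_equalityI) auto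
  ultimately show ?thesis by blast
qed

theorem tests_bij:
  "bij_betw (map rep) (Ts A B) {Rs \<in> Ts uI (cm B At). sum_list (map (marg B At) Rs) = \<omega>}"
proof (rule bij_betw_imageI)
  show "inj_on (map rep) (Ts A B)"
  proof (rule inj_onI)
    fix t t' assume t: "t \<in> Ts A B" and t': "t' \<in> Ts A B" and e: "map rep t = map rep t'"
    have "inj_on rep (set t \<union> set t')"
      by (rule inj_onI) (use rep_inj test_mem[OF t] test_mem[OF t'] in blast)
    then show "t = t'" using e inj_on_map_eq_map by blast
  qed
  show "map rep ` Ts A B = {Rs \<in> Ts uI (cm B At). sum_list (map (marg B At) Rs) = \<omega>}"
  proof
    show "map rep ` Ts A B \<subseteq> {Rs \<in> Ts uI (cm B At). sum_list (map (marg B At) Rs) = \<omega>}"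
      using map_rep_test map_rep_marg by blast
    show "{Rs \<in> Ts uI (cm B At). sum_list (map (marg B At) Rs) = \<omega>} \<subseteq> map rep ` Ts A B"
      using test_realized by blast
  qed
qed

lemma rep_zero: "C \<in> Tr A B \<Longrightarrow> 0 \<in> rep ` Tr A B"
  using zero_tr[of C A B] image_eqI[of 0 rep 0] by (simp add: rep_def)

text \<open>Every state \<open>S\<close> of \<open>B \<tilde>A\<close> whose marginal refines \<open>\<omega>\<close> represents a transformation:
  embedding \<open>S\<close> into a test refining \<open>\<omega>\<close> (at the position of its marginal) gives a
  preparation test with marginals adding up to \<open>\<omega>\<close>, which comes from a test.\<close>
lemma state_realized:
  assumes SS: "S \<in> States Th (cm B At)" and rf: "refines Th uI At (marg B At S) \<omega>"
  shows "S \<in> rep ` Tr A B"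
proof -
  have ST: "S \<in> Tr uI (cm B At)" using SS by (simp add: States_def)
  obtain s Y0 m0 where s: "s \<in> Ts uI At" "Y0 \<subseteq> {..<length s}" "\<omega> = (\<Sum>j\<in>Y0. s ! j)"
    "m0 \<in> Y0" "marg B At S = s ! m0"
    using rf unfolding refines_def by blast
  have m0: "m0 < length s" using s by auto
  have "(\<Sum>j\<in>{..<length s} - Y0. s ! j) = 0"
    using outside_normalized_zero[OF s(1,2)] eff_omega s(3) by (intro sum.neutral) auto
  then have sum_s: "(\<Sum>j<length s. s ! j) = \<omega>"
    using sum.subset_diff[OF s(2), of "(!) s"] s(3) by simp
  obtain p where p: "p \<ge> 0" "sc (ee (cm B At)) S = p *\<^sub>R ii uI" using state_prob[OF SS] by blast
  show ?thesis
  proof (cases "p = 0")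
    case True
    have "sc (sc (pa (ii B) (ee At)) S) (ee A) \<in> Tr A B"
      using seq_closed[OF eff_tr seq_closed[OF ST par_closed[OF id_tr[of B] eff_tr[of At], simplified]]] .
    moreover have "S = 0" using state_zero[OF SS] p True by simp
    ultimately show ?thesis using rep_zero by simp
  next
    case False
    then have pp: "p > 0" using p by simp
    define S' where "S' = (1/p) *\<^sub>R S"
    have S't: "[S'] \<in> Ts uI (cm B At)" unfolding S'_def by (rule normalize[OF SS p(2) pp])
    have pS': "p *\<^sub>R S' = S" using pp by (simp add: S'_def)
    define \<beta> where "\<beta> = sc (pa (ii B) (ee At)) S'"
    have b: "\<beta> \<in> States1 Th B"
      unfolding \<beta>_def using channel_state[OF test_states1[OF S't]]
        par_single[OF identity_test[of B] eff_test[of At]] by simp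
    define T where "T = map (\<lambda>i. if i = m0 then p *\<^sub>R S' else sc (pa \<beta> (ii At)) (s ! i)) [0..<length s]"
    have "sc (ee At) (s ! m0) = p *\<^sub>R ii uI" using eff_marg[OF ST] s(5) p by simp
    then have T: "T \<in> Ts uI (cm B At)"
      unfolding T_def \<beta>_def by (rule embed_in_test[OF s(1) m0 S't])
    have "map (marg B At) T = s"
    proof (rule nth_equalityI)
      show "length (map (marg B At) T) = length s" by (simp add: T_def)
      fix i assume "i < length (map (marg B At) T)"
      then have i: "i < length s" by (simp add: T_def)
      then show "map (marg B At) T ! i = s ! i"
        using pS' s(5) marg_prepare[OF b test_nth[OF s(1) i]] by (simp add: T_def)
    qed
    then have "sum_list (map (marg B At) T) = \<omega>"
      using sum_s by (simp add: sum_list_sum_nth atLeast0LessThan)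
    then obtain t where t: "t \<in> Ts A B" "map rep t = T"
      using test_realized[OF T] by blast
    have len: "length t = length s" using arg_cong[OF t(2), of length] by (simp add: T_def)
    then have "rep (t ! m0) = S" using arg_cong[OF t(2), of "\<lambda>l. l ! m0"] m0 pS' by (simp add: T_def)
    then show ?thesis using test_nth[OF t(1)] m0 len by (metis image_eqI)
  qed
qed

theorem trans_bij: "bij_betw rep (Tr A B) {S \<in> States Th (cm B At). marg B At S \<in> refset Th uI At \<omega>}"
proof (rule bij_betw_imageI)
  show "inj_on rep (Tr A B)" by (rule inj_onI) (rule rep_inj)
  have "marg B At (rep C) \<in> refset Th uI At \<omega>" if C: "C \<in> Tr A B" for C
  proof -
    obtain t c where t: "t \<in> Ts A B" "c < length t" "t ! c = C" using tr_in_test[OF C] by blast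
    define L where "L = map (marg B At) (map rep t)"
    have "L \<in> Ts uI At"
      unfolding L_def marg_def[abs_def] by (rule cond_map[OF map_rep_test[OF t(1)] marg_test])
    moreover have "(\<Sum>j\<in>{..<length L}. L ! j) = \<omega>"
      using map_rep_marg[OF t(1)] by (simp add: L_def sum_list_sum_nth atLeast0LessThan)
    moreover have "L ! c = marg B At (rep C)" "c < length L" using t by (simp_all add: L_def)
    ultimately show ?thesis
      unfolding refset_def refines_def
      by (intro CollectI bexI[of _ L] exI[of _ "{..<length L}"] conjI) (auto simp: image_iff intro!: bexI[of _ c])
  qed
  moreover have "rep C \<in> States Th (cm B At)" if "C \<in> Tr A B" for C
    using rep_tr[OF that] by (simp add: States_def)
  moreover have "S \<in> rep ` Tr A B" if "S \<in> States Th (cm B At)" "marg B At S \<in> refset Th uI At \<omega>" for S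
    using state_realized that by (simp add: refset_def)
  ultimately show "rep ` Tr A B = {S \<in> States Th (cm B At). marg B At S \<in> refset Th uI At \<omega>}"
    by blast
qed

text \<open>If \<open>R\<^sub>C\<close> is pure then \<open>C\<close> is atomic: refinements of \<open>C\<close> are mapped to refinements of
  \<open>R\<^sub>C\<close>, and \<open>rep\<close> is injective and linear.\<close>
lemma pure_rep_atomic:
  assumes C: "C \<in> Tr A B" and P: "pure Th (cm B At) (rep C)"
  shows "atomic Th A B C"
  unfolding atomic_def
proof (intro allI impI)
  fix D assume "refines Th A B D C"
  then obtain s Y0 j0 where s: "s \<in> Ts A B" "Y0 \<subseteq> {..<length s}" "C = (\<Sum>j\<in>Y0. s ! j)"
    "j0 \<in> Y0" "D = s ! j0"
    unfolding refines_def by blast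
  have "rep C = (\<Sum>j\<in>Y0. map rep s ! j)" using s(2,3) by (auto simp: rep_sum intro!: sum.cong)
  moreover have "rep D = map rep s ! j0" using s by auto
  ultimately have "refines Th uI (cm B At) (rep D) (rep C)"
    unfolding refines_def using map_rep_test[OF s(1)] s(2,4) by (intro bexI exI[of _ Y0]) auto
  then obtain c where c: "0 \<le> c" "c \<le> 1" "rep D = c *\<^sub>R rep C"
    using pureD[OF P] by blast
  have "D \<in> Tr A B" using s test_nth by auto
  then have "D = c *\<^sub>R C" using rep_inj scale_tr[OF C c(1,2)] c(3) rep_scale by metis
  then show "\<exists>c. 0 \<le> c \<and> c \<le> 1 \<and> D = c *\<^sub>R C" using c by blast
qed

text \<open>Given
  \<open>R\<^sub>C = \<Sum>\<^sub>j\<^sub>\<in>\<^sub>Y\<^sub>0 T\<^sub>j\<close>, flag the part \<open>T\<^sub>j\<^sub>0\<close> with \<open>\<alpha>\<^sub>0\<close> and the rest of the block with \<open>\<alpha>\<^sub>1\<close>,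
  normalize the result to \<open>\<Delta>\<close>, and substitute it for the outcome \<open>R\<^sub>C\<close> of the preparation test
  representing a test containing \<open>C\<close>, all its other outcomes being flagged with \<open>\<alpha>\<^sub>2\<close>.
  The realization lemma splits \<open>C\<close> into \<open>C\<^sub>0 + C\<^sub>1\<close> with \<open>R\<^sub>C\<^sub>0 = T\<^sub>j\<^sub>0\<close>.\<close>
lemma refinement_realized:
  assumes C: "C \<in> Tr A B" and T: "T \<in> Ts uI (cm B At)" "Y0 \<subseteq> {..<length T}"
    and RC: "rep C = (\<Sum>j\<in>Y0. T ! j)" and j0: "j0 \<in> Y0"
    and q: "sc (ee (cm B At)) (rep C) = q *\<^sub>R ii uI" "q > 0"
  shows "\<exists>C0. refines Th A B C0 C \<and> rep C0 = T ! j0"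
proof -
  obtain t c where t: "t \<in> Ts A B" "c < length t" "t ! c = C" using tr_in_test[OF C] by blast
  obtain F \<alpha> ds where df: "dist_family (Suc 2) F \<alpha> ds" using dist_family_exists by blast
  have al: "\<And>i. i < 3 \<Longrightarrow> \<alpha> i \<in> States1 Th F" using df by (auto simp: dist_family_def)
  define G1 where "G1 = (\<Sum>j\<in>Y0 - {j0}. T ! j)"
  define G2 where "G2 = (\<Sum>i\<in>{..<length (map rep t)} - {c}. map rep t ! i)"
  define Gs where "Gs = [T ! j0, G1, G2]"
  have RC': "rep C = T ! j0 + G1"
    unfolding RC G1_def by (rule sum.remove[OF finite_subset[OF T(2)] j0]) simp
  have c: "c < length (map rep t)" "sc (ee (cm B At)) (map rep t ! c) = q *\<^sub>R ii uI"
    using t q by simp_all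
  have "[(1/q) *\<^sub>R (sc (flag B At (\<alpha> 0)) (T ! j0) + sc (flag B At (\<alpha> 1)) G1)]
    \<in> Ts uI (cm B (cm F At))"
    using normalized_flagged_split[OF T j0 al[of 0] al[of 1] _ q(2)] q(1) RC by (simp add: G1_def)
  from replace_outcome[OF map_rep_test[OF t(1)] c this flag_test[OF al[of 2]]]
  have "[q *\<^sub>R ((1/q) *\<^sub>R (sc (flag B At (\<alpha> 0)) (T ! j0) + sc (flag B At (\<alpha> 1)) G1))
          + sc (flag B At (\<alpha> 2)) G2] \<in> Ts uI (cm B (cm F At))"
    by (simp add: G2_def)
  then have Gam: "[\<Sum>i<Suc 2. sc (flag B At (\<alpha> i)) (Gs ! i)] \<in> Ts uI (cm B (cm F At))"
    using q(2) by (simp add: Gs_def numeral_2_eq_2 add.assoc)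
  have "(\<Sum>i<length t. marg B At (map rep t ! i)) = \<omega>"
    using map_rep_marg[OF t(1)] by (simp add: sum_map_nth)
  then have M: "(\<Sum>i<Suc 2. marg B At (Gs ! i)) = \<omega>"
    using sum.remove[of "{..<length t}" c "\<lambda>i. marg B At (map rep t ! i)"] t RC'
    by (simp add: Gs_def G2_def numeral_2_eq_2 marg_def sc_addr sc_sumr add.assoc)
  have "G1 \<in> Tr uI (cm B At)" unfolding G1_def by (rule sub_sum_tr[OF T(1)]) (use T(2) in auto)
  moreover have "G2 \<in> Tr uI (cm B At)" unfolding G2_def by (rule sub_sum_tr[OF map_rep_test[OF t(1)]]) auto
  ultimately have GT: "Gs ! i \<in> Tr uI (cm B At)" if "i < Suc 2" for i
    using that test_nth[OF T(1)] T(2) j0 by (auto simp: Gs_def numeral_2_eq_2 less_Suc_eq)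
  obtain cs where cs: "cs \<in> Ts A B" "length cs = Suc 2" "\<forall>i<Suc 2. rep (cs ! i) = Gs ! i"
    using realize_flagged[OF df GT Gam M] by blast
  have sub: "{0::nat, 1} \<subseteq> {..<length cs}" using cs(2) by auto
  have c01: "cs ! 0 + cs ! 1 \<in> Tr A B" using sub_sum_tr[OF cs(1) sub] by simp
  have "rep (cs ! 0 + cs ! 1) = rep C"
    using cs(3) RC' rep_sum[of "\<lambda>i. cs ! i" "{0, 1}"] by (simp add: Gs_def)
  then have "cs ! 0 + cs ! 1 = C" by (rule rep_inj[OF c01 C])
  then have "refines Th A B (cs ! 0) C"
    unfolding refines_def using cs(1) sub by (intro bexI[OF _ cs(1)] exI[of _ "{0::nat, 1}"]) auto
  then show ?thesis using cs(3) by (auto simp: Gs_def)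
qed

lemma atomic_rep_pure:
  assumes C: "C \<in> Tr A B" and atC: "atomic Th A B C"
  shows "pure Th (cm B At) (rep C)"
proof -
  have "atomic Th uI (cm B At) (rep C)"
    unfolding atomic_def
  proof (intro allI impI)
    fix D assume "refines Th uI (cm B At) D (rep C)"
    then obtain T Y0 j0 where T: "T \<in> Ts uI (cm B At)" "Y0 \<subseteq> {..<length T}"
      "rep C = (\<Sum>j\<in>Y0. T ! j)" "j0 \<in> Y0" "D = T ! j0"
      unfolding refines_def by blast
    obtain q where q: "q \<ge> 0" "sc (ee (cm B At)) (rep C) = q *\<^sub>R ii uI"
      using state_prob rep_tr[OF C] by (metis States_def)
    show "\<exists>c. 0 \<le> c \<and> c \<le> 1 \<and> D = c *\<^sub>R rep C"
    proof (cases "q = 0")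
      case True
      then have "D = 0" using refinement_zero_weight[OF T(1,2) _ T(4)] T(3,5) q by simp
      then show ?thesis by auto
    next
      case False
      then obtain C0 where "refines Th A B C0 C" "rep C0 = D"
        using refinement_realized[OF C T(1-4) q(2)] q(1) T(5) by fastforce
      then show ?thesis using atC rep_scale unfolding atomic_def by metis
    qed
  qed
  then show ?thesis using rep_tr[OF C] by (simp add: pure_def States_def)
qed

theorem atomic_iff_pure: "C \<in> Tr A B \<Longrightarrow> atomic Th A B C \<longleftrightarrow> pure Th (cm B At) (rep C)"
  using atomic_rep_pure pure_rep_atomic by blast

end

theorem mainTheorem11:
  fixes Th :: "('s, 't::real_normed_vector) opt"
    and A At :: 's and \<Psi> :: 't
  assumes framework: "opt_framework Th"
    and purification: "purification_postulate Th"
    and Psi_state: "\<Psi> \<in> States1 Th (cmp Th A At)"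
    and Psi_pure: "pure Th (cmp Th A At) \<Psi>"
    and Psi_faithful: "dyn_faithful Th A At \<Psi>"
  defines "\<omega>t \<equiv> sq Th (pr Th (eff Th A) (idt Th At)) \<Psi>"
    and "R \<equiv> (\<lambda>C. sq Th (pr Th C (idt Th At)) \<Psi>)"
  shows "\<forall>B.
     bij_betw (map R) (Tests Th A B)
       {Rs \<in> Tests Th (unitS Th) (cmp Th B At).
          sum_list (map (\<lambda>Ri. sq Th (pr Th (eff Th B) (idt Th At)) Ri) Rs) = \<omega>t}
     \<and> (\<forall>C \<in> Trans Th A B. atomic Th A B C \<longleftrightarrow> pure Th (cmp Th B At) (R C))
     \<and> bij_betw R (Trans Th A B)
         {S \<in> States Th (cmp Th B At).
            sq Th (pr Th (eff Th B) (idt Th At)) S \<in> refset Th (unitS Th) At \<omega>t}"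
proof -
  interpret causal_opt Th by (rule opt_framework_causal_opt[OF framework])
  interpret faithful_state Th A At \<Psi>
    by unfold_locales (fact purification Psi_state Psi_pure Psi_faithful)+
  have "R = rep" by (simp add: R_def rep_def[abs_def])
  moreover have "(\<lambda>Ri. sq Th (pr Th (eff Th B) (idt Th At)) Ri) = marg B At" for B
    by (simp add: marg_def[abs_def])
  ultimately show ?thesis
    unfolding \<omega>t_def using tests_bij atomic_iff_pure trans_bij by simp
qed

end
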